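(* Work in the work extraction game described in the context. Let $\rho$ and $\sigma$ be states on the same number $d=2n+1$ of levels. Assume that each of $\rho$ and $\sigma$ has at least $n+1$ levels with occupation probability $0$ and energy $+\infty$. Let $\varepsilon\in[0,1)$. Then the bound $W^\varepsilon(\rho\to\sigma)$ is achievable in the following sense. For every $\delta>0$ there is a strategy, starting from $\rho$ and ending with the energies of $\sigma$, such that: - with probability at least $1-\varepsilon-\delta$, the total extracted work satisfies $W_{\rm tot}\ge W^\varepsilon(\rho\to\sigma)-\delta$; - conditioned on this event, the distribution of the final occupied level is within total variation distance $\delta$ of the occupation probabilities of $\sigma$. (The paper constructs an explicit protocol realising this as a limit.)
   Context: Conventions. The constants $k>0$ (Boltzmann's constant) and $T>0$ (temperature) are fixed. A state is a finite-level system with energies $E_1,\dots,E_d\in\mathbb{R}\cup\{+\infty\}$, not all $+\infty$, together with a diagonal density matrix $\rho=\sum_i\lambda_i|e_i\rangle\langle e_i|$. Equivalently, it is a probability vector $(\lambda_i)$ over the levels, and we require $\lambda_i=0$ whenever $E_i=+\infty$. Gibbs rescaling. $G^T(\rho)$ is the function on $[0,\infty)$ built as follows. Each level $i$ with $E_i<\infty$ is represented by a block: an interval of length $e^{-E_i/kT}$ on which the function takes the constant value $\lambda_i e^{E_i/kT}$, so the block has area $\lambda_i$. The blocks are placed consecutively starting at $0$, in order of nonincreasing height. The function is $0$ beyond $Z=\sum_{i:E_i<\infty}e^{-E_i/kT}$. Thus $G^T(\rho)$ is a nonincreasing probability density supported in $[0,Z]$. Relative mixedness. For nonincreasing integrable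 functions $f,g\ge 0$ on $[0,\infty)$, $$M(f\|g):=\max\Big\{m>0:\ \int_0^l f(x)\,dx\ge\int_0^{lm}g(x)\,dx\ \text{for all } l\ge 0\Big\}.$$ For $\varepsilon\in[0,1)$ define $$W^\varepsilon(\rho\to\sigma):=kT\ln M\big(G^T(\rho)/(1-\varepsilon)\,\big\|\,G^T(\sigma)\big).$$ Work extraction game. - A working medium has levels $1,\dots,d$. At each time it has an energy assignment $E\in(\mathbb{R}\cup\{+\infty\})^d$ and occupies exactly one (random) level. - For an assignment $E$, the Gibbs vector is $\gamma_E(i)=e^{-E_i/kT}/\sum_j e^{-E_j/kT}$, which is $0$ for levels at $+\infty$. - A strategy is a finite sequence of elementary steps, fixed in advance and independent of the random outcomes. Each step is one of two kinds. - (i) Thermalisation. Choose a $d\times d$ column-stochastic matrix $B$ with $B\gamma_E=\gamma_E$ for the current energies $E$. If the current level is $j$, the new level is $i$ with probability $B_{ij}$. Energies are unchanged and no work is exchanged. - (ii) Energy change. Choose a set $S$ of levels and new values for the energies of the levels in $S$; the other energies are unchanged and the occupied level is unchanged. If the occupied level $i$ lies in $S$, the work reservoir receives extracted work $E_i^{\rm old}-E_i^{\rm new}$; otherwise it receives $0$. (The paper changes all levels in $S$ by a common amount; arbitrary changes are compositions of such steps.) - The total extracted work $W_{\rm tot}$ is the sum over steps. By convention, a realisation in which some step yields work $-\infty$ (an occupied level raised to $+\infty$) has $W_{\rm tot}=-\infty$. - The initial energies are those of $\rho$ and the initial occupied level is distributed according to $\rho$'s occupation probabilities. *)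

theory Defs
  imports "HOL-Analysis.Analysis" "HOL-Library.Extended_Real"
begin

text \<open>Energies take values in ereal; the
  value -\<infinity> is excluded by validity conditions, +\<infinity> is allowed.
  k is Boltzmann's constant and T the temperature (both passed explicitly).\<close>

definition is_state :: "nat \<Rightarrow> (nat \<Rightarrow> ereal) \<Rightarrow> (nat \<Rightarrow> real) \<Rightarrow> bool" where
  "is_state d E lam \<longleftrightarrow>
     (\<forall>i<d. E i \<noteq> -\<infinity>) \<and> (\<exists>i<d. E i \<noteq> \<infinity>) \<and>
     (\<forall>i<d. 0 \<le> lam i) \<and> (\<Sum>i<d. lam i) = 1 \<and>
     (\<forall>i<d. E i = \<infinity> \<longrightarrow> lam i = 0)"

definition bweight :: "real \<Rightarrow> real \<Rightarrow> ereal \<Rightarrow> real" where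
  "bweight k T e = (if e = \<infinity> then 0 else exp (- real_of_ereal e / (k * T)))"

definition block_height :: "real \<Rightarrow> real \<Rightarrow> (nat \<Rightarrow> ereal) \<Rightarrow> (nat \<Rightarrow> real) \<Rightarrow> nat \<Rightarrow> real" where
  "block_height k T E lam i = lam i * exp (real_of_ereal (E i) / (k * T))"

definition finite_levels :: "nat \<Rightarrow> (nat \<Rightarrow> ereal) \<Rightarrow> nat set" where
  "finite_levels d E = {i. i < d \<and> E i \<noteq> \<infinity>}"

text \<open>Start of the block of level i: blocks are ordered by nonincreasing height,
  ties broken by the level index.\<close>
definition block_start :: "real \<Rightarrow> real \<Rightarrow> nat \<Rightarrow> (nat \<Rightarrow> ereal) \<Rightarrow> (nat \<Rightarrow> real) \<Rightarrow> nat \<Rightarrow> real" where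
  "block_start k T d E lam i =
     (\<Sum>j \<in> {j \<in> finite_levels d E.
              block_height k T E lam j > block_height k T E lam i \<or>
              (block_height k T E lam j = block_height k T E lam i \<and> j < i)}.
        bweight k T (E j))"

definition gibbs_rescaling :: "real \<Rightarrow> real \<Rightarrow> nat \<Rightarrow> (nat \<Rightarrow> ereal) \<Rightarrow> (nat \<Rightarrow> real) \<Rightarrow> real \<Rightarrow> real" where
  "gibbs_rescaling k T d E lam x =
     (\<Sum>i \<in> finite_levels d E.
        if block_start k T d E lam i \<le> x \<and> x < block_start k T d E lam i + bweight k T (E i)
        then block_height k T E lam i else 0)"

definition rel_mixedness :: "(real \<Rightarrow> real) \<Rightarrow> (real \<Rightarrow> real) \<Rightarrow> real" where
  "rel_mixedness f g =
     (GREATEST m. m > 0 \<and> (\<forall>l\<ge>0. integral {0..l} f \<ge> integral {0..l * m} g))"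

definition work_bound :: "real \<Rightarrow> real \<Rightarrow> nat \<Rightarrow> real \<Rightarrow>
    (nat \<Rightarrow> ereal) \<Rightarrow> (nat \<Rightarrow> real) \<Rightarrow> (nat \<Rightarrow> ereal) \<Rightarrow> (nat \<Rightarrow> real) \<Rightarrow> real" where
  "work_bound k T d \<epsilon> E\<rho> lam\<rho> E\<sigma> lam\<sigma> =
     k * T * ln (rel_mixedness (\<lambda>x. gibbs_rescaling k T d E\<rho> lam\<rho> x / (1 - \<epsilon>))
                               (gibbs_rescaling k T d E\<sigma> lam\<sigma>))"

datatype step =
    Therm "nat \<Rightarrow> nat \<Rightarrow> real"   \<comment> \<open>B i j = probability of moving from level j to level i\<close>
  | Change "nat set" "nat \<Rightarrow> ereal"

definition gibbs_vec :: "real \<Rightarrow> real \<Rightarrow> nat \<Rightarrow> (nat \<Rightarrow> ereal) \<Rightarrow> nat \<Rightarrow> real" where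
  "gibbs_vec k T d E i = bweight k T (E i) / (\<Sum>j<d. bweight k T (E j))"

fun apply_step :: "(nat \<Rightarrow> ereal) \<Rightarrow> step \<Rightarrow> (nat \<Rightarrow> ereal)" where
  "apply_step E (Therm B) = E"
| "apply_step E (Change S F) = (\<lambda>i. if i \<in> S then F i else E i)"

fun valid_step :: "real \<Rightarrow> real \<Rightarrow> nat \<Rightarrow> (nat \<Rightarrow> ereal) \<Rightarrow> step \<Rightarrow> bool" where
  "valid_step k T d E (Therm B) \<longleftrightarrow>
     (\<forall>i<d. \<forall>j<d. 0 \<le> B i j) \<and> (\<forall>j<d. (\<Sum>i<d. B i j) = 1) \<and>
     (\<forall>i<d. (\<Sum>j<d. B i j * gibbs_vec k T d E j) = gibbs_vec k T d E i)"
| "valid_step k T d E (Change S F) \<longleftrightarrow> S \<subseteq> {..<d} \<and> (\<forall>i\<in>S. F i \<noteq> -\<infinity>)"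

fun valid_strategy :: "real \<Rightarrow> real \<Rightarrow> nat \<Rightarrow> (nat \<Rightarrow> ereal) \<Rightarrow> step list \<Rightarrow> bool" where
  "valid_strategy k T d E [] = True"
| "valid_strategy k T d E (s # ss) \<longleftrightarrow> valid_step k T d E s \<and> valid_strategy k T d (apply_step E s) ss"

definition final_energies :: "(nat \<Rightarrow> ereal) \<Rightarrow> step list \<Rightarrow> (nat \<Rightarrow> ereal)" where
  "final_energies E ss = foldl apply_step E ss"

fun step_factor :: "step \<Rightarrow> nat \<Rightarrow> nat \<Rightarrow> real" where
  "step_factor (Therm B) j i = B i j"
| "step_factor (Change S F) j i = (if i = j then 1 else 0)"

fun step_work :: "(nat \<Rightarrow> ereal) \<Rightarrow> step \<Rightarrow> nat \<Rightarrow> ereal" where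
  "step_work E (Therm B) j = 0"
| "step_work E (Change S F) j = (if j \<in> S then E j - F j else 0)"

text \<open>A realisation: initial level j and the list of levels occupied after each step.\<close>
fun path_prob :: "step list \<Rightarrow> nat \<Rightarrow> nat list \<Rightarrow> real" where
  "path_prob [] j [] = 1"
| "path_prob (s # ss) j (i # is) = step_factor s j i * path_prob ss i is"
| "path_prob _ _ _ = 0"

fun path_works :: "(nat \<Rightarrow> ereal) \<Rightarrow> step list \<Rightarrow> nat \<Rightarrow> nat list \<Rightarrow> ereal list" where
  "path_works E (s # ss) j (i # is) = step_work E s j # path_works (apply_step E s) ss i is"
| "path_works E _ _ _ = []"

definition total_work :: "(nat \<Rightarrow> ereal) \<Rightarrow> step list \<Rightarrow> nat \<Rightarrow> nat list \<Rightarrow> ereal" where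
  "total_work E ss j ls =
     (let ws = path_works E ss j ls in if -\<infinity> \<in> set ws then -\<infinity> else sum_list ws)"

definition paths :: "nat \<Rightarrow> nat \<Rightarrow> nat list set" where
  "paths d m = {ls. length ls = m \<and> set ls \<subseteq> {..<d}}"

definition prob_event :: "nat \<Rightarrow> (nat \<Rightarrow> real) \<Rightarrow> step list \<Rightarrow> (nat \<Rightarrow> nat list \<Rightarrow> bool) \<Rightarrow> real" where
  "prob_event d lam ss P =
     (\<Sum>j<d. \<Sum>ls \<in> paths d (length ss). if P j ls then lam j * path_prob ss j ls else 0)"

definition final_level :: "nat \<Rightarrow> nat list \<Rightarrow> nat" where
  "final_level j ls = last (j # ls)"

end

theory Submission
  imports Defs
begin

text \<open>The integrals \<open>L\<^sub>\<rho>, L\<^sub>\<sigma>\<close> of the Gibbs rescalings are piecewise linear, and with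
  \<open>M = M(G\<^sup>T(\<rho>)/(1 - \<epsilon>) \<parallel> G\<^sup>T(\<sigma>))\<close> they satisfy \<open>(1 - \<epsilon>) L\<^sub>\<sigma>(l M) \<le> L\<^sub>\<rho>(l)\<close>.
  Read as a comparison of block profiles, this domination yields a transport plan: the blocks of
  \<open>\<sigma>\<close>, narrowed by the factor \<open>M\<close> and with masses scaled by \<open>1 - \<epsilon>\<close>, can be filled greedily,
  highest first, from windows of the blocks of \<open>\<rho>\<close>. Raising empty levels to the energies of
  \<open>\<sigma>\<close> shifted by \<open>W = kT ln M\<close> narrows their Gibbs weights by exactly \<open>M\<close>, so a single
  detailed-balance thermalisation realises the plan. Lowering these levels afterwards extracts \<open>W\<close>
  from every run that was transported, which happens with probability exactly \<open>1 - \<epsilon>\<close> and leaves the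
  system exactly in \<open>\<sigma>\<close>; the \<open>n + 1\<close> empty levels provide the room for the relabelling this needs.\<close>

section \<open>Stacked blocks on the half-line\<close>

definition overlap :: "real \<Rightarrow> real \<Rightarrow> real \<Rightarrow> real \<Rightarrow> real" where
  "overlap s w lo hi = max 0 (min (s + w) hi - max s lo)"

lemma overlap_nonneg: "0 \<le> overlap s w lo hi"
  by (simp add: overlap_def)

lemma overlap_le_width: "0 \<le> w \<Longrightarrow> overlap s w lo hi \<le> w"
  by (simp add: overlap_def)

lemma overlap_diff:
  "\<lbrakk>0 \<le> s; 0 \<le> w; 0 \<le> \<alpha>; 0 \<le> u\<rbrakk> \<Longrightarrow> overlap s w 0 (\<alpha> + u) - overlap s w 0 \<alpha> = overlap s w \<alpha> (\<alpha> + u)"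
  by (simp add: overlap_def max_def min_def)

lemma overlap_remove_window:
  "\<lbrakk>0 \<le> s; 0 \<le> w; 0 \<le> \<alpha>; 0 \<le> u; 0 \<le> y\<rbrakk> \<Longrightarrow>
   overlap (s - overlap \<alpha> u 0 s) (w - overlap s w \<alpha> (\<alpha> + u)) 0 y =
   (if y \<le> \<alpha> then overlap s w 0 y else overlap s w 0 (y + u) - overlap s w \<alpha> (\<alpha> + u))"
  by (simp add: overlap_def max_def min_def)

lemma overlap_shift: "\<lbrakk>u \<le> s; 0 \<le> u; 0 \<le> y\<rbrakk> \<Longrightarrow> overlap (s - u) w 0 y = overlap s w 0 (y + u)"
  by (simp add: overlap_def max_def min_def)

lemma overlap_scale:
  assumes "0 < M"
  shows "M * overlap (s / M) (w / M) 0 y = overlap s w 0 (y * M)"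
proof -
  have "M * overlap (s / M) (w / M) 0 y = max 0 (min (M * (s / M) + M * (w / M)) (M * y) - max (M * (s / M)) 0)"
    using assms unfolding overlap_def
    by (simp add: max_mult_distrib_left min_mult_distrib_left distrib_left right_diff_distrib)
  also have "\<dots> = overlap s w 0 (y * M)"
    using assms by (simp add: overlap_def mult.commute)
  finally show ?thesis .
qed

lemma overlap_eq_measure: "0 \<le> w \<Longrightarrow> overlap s w lo hi = measure lborel ({s..<s + w} \<inter> {lo..<hi})"
proof -
  have "{s..<s + w} \<inter> {lo..<hi} = {max s lo..<min (s + w) hi}"
    by auto
  then show "0 \<le> w \<Longrightarrow> ?thesis"
    by (cases "max s lo \<le> min (s + w) hi") (auto simp: overlap_def)
qed

definition blocks_disjoint :: "'a set \<Rightarrow> ('a \<Rightarrow> real) \<Rightarrow> ('a \<Rightarrow> real) \<Rightarrow> bool" where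
  "blocks_disjoint I s w \<longleftrightarrow> (\<forall>i\<in>I. \<forall>j\<in>I. i \<noteq> j \<longrightarrow> s i + w i \<le> s j \<or> s j + w j \<le> s i)"

lemma sum_overlap_le:
  assumes "finite I" "blocks_disjoint I s w" "\<And>i. i \<in> I \<Longrightarrow> 0 \<le> w i"
  shows "(\<Sum>i\<in>I. overlap (s i) (w i) lo hi) \<le> max 0 (hi - lo)"
proof -
  let ?A = "\<lambda>i. {s i..<s i + w i} \<inter> {lo..<hi}"
  have Ico_finite: "emeasure lborel {a..<b::real} \<noteq> \<infinity>" for a b
    by (cases "a \<le> b") auto
  have disj: "disjoint_family_on ?A I"
    using assms(2) unfolding disjoint_family_on_def blocks_disjoint_def by (auto; fastforce)
  have "(\<Sum>i\<in>I. overlap (s i) (w i) lo hi) = (\<Sum>i\<in>I. measure lborel (?A i))"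
    using assms(3) by (simp add: overlap_eq_measure)
  also have "\<dots> = measure lborel (\<Union>i\<in>I. ?A i)"
    by (rule measure_finite_Union[symmetric]) (use assms(1) disj Ico_finite in auto)
  also have "\<dots> \<le> measure lborel {lo..<hi}"
    by (rule measure_mono_fmeasurable)
       (use assms(1) Ico_finite[of lo hi] in \<open>auto simp: fmeasurable_def top.not_eq_extremum\<close>)
  also have "\<dots> = max 0 (hi - lo)"
    by (cases "lo \<le> hi") auto
  finally show ?thesis .
qed

text \<open>The integral over \<open>[0, y]\<close> of the step function that has a block of width \<open>w a\<close>
  and height \<open>h a\<close> starting at \<open>s a\<close> for every \<open>a \<in> A\<close>.\<close>

definition block_cdf :: "'a set \<Rightarrow> ('a \<Rightarrow> real) \<Rightarrow> ('a \<Rightarrow> real) \<Rightarrow> ('a \<Rightarrow> real) \<Rightarrow> real \<Rightarrow> real" where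
  "block_cdf A w h s y = (\<Sum>a\<in>A. h a * overlap (s a) (w a) 0 y)"

definition block_layout :: "'a set \<Rightarrow> ('a \<Rightarrow> real) \<Rightarrow> ('a \<Rightarrow> real) \<Rightarrow> ('a \<Rightarrow> real) \<Rightarrow> bool" where
  "block_layout A w h s \<longleftrightarrow>
     finite A \<and> (\<forall>a\<in>A. 0 \<le> w a \<and> 0 \<le> h a \<and> 0 \<le> s a) \<and> blocks_disjoint A s w"

lemma block_cdf_diff:
  assumes "block_layout A w h s" "0 \<le> \<alpha>" "0 \<le> u"
  shows "block_cdf A w h s (\<alpha> + u) - block_cdf A w h s \<alpha> = (\<Sum>a\<in>A. h a * overlap (s a) (w a) \<alpha> (\<alpha> + u))"
  using assms unfolding block_cdf_def sum_subtractf[symmetric] right_diff_distrib[symmetric] block_layout_def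
  by (intro sum.cong refl arg_cong2[where f="(*)"] overlap_diff) auto

text \<open>Cutting the window \<open>[\<alpha>, \<alpha> + u)\<close> out of the half-line and closing the gap.\<close>

definition cut_width :: "real \<Rightarrow> real \<Rightarrow> ('a \<Rightarrow> real) \<Rightarrow> ('a \<Rightarrow> real) \<Rightarrow> 'a \<Rightarrow> real" where
  "cut_width \<alpha> u s w a = w a - overlap (s a) (w a) \<alpha> (\<alpha> + u)"

definition cut_start :: "real \<Rightarrow> real \<Rightarrow> ('a \<Rightarrow> real) \<Rightarrow> 'a \<Rightarrow> real" where
  "cut_start \<alpha> u s a = s a - overlap \<alpha> u 0 (s a)"

lemma block_cdf_cut:
  assumes A: "block_layout A w h s" and "0 \<le> \<alpha>" "0 \<le> u" "0 \<le> y"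
  shows "block_cdf A (cut_width \<alpha> u s w) h (cut_start \<alpha> u s) y =
    (if y \<le> \<alpha> then block_cdf A w h s y
     else block_cdf A w h s (y + u) - (block_cdf A w h s (\<alpha> + u) - block_cdf A w h s \<alpha>))"
proof (cases "y \<le> \<alpha>")
  case True
  then show ?thesis
    using assms overlap_remove_window
    by (auto simp: block_cdf_def block_layout_def cut_width_def cut_start_def intro!: sum.cong)
next
  case False
  have "block_cdf A (cut_width \<alpha> u s w) h (cut_start \<alpha> u s) y =
     (\<Sum>a\<in>A. h a * (overlap (s a) (w a) 0 (y + u) - overlap (s a) (w a) \<alpha> (\<alpha> + u)))"
    using assms overlap_remove_window False
    by (auto simp: block_cdf_def block_layout_def cut_width_def cut_start_def intro!: sum.cong)
  also have "\<dots> = block_cdf A w h s (y + u) - (\<Sum>a\<in>A. h a * overlap (s a) (w a) \<alpha> (\<alpha> + u))"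
    unfolding block_cdf_def by (simp add: right_diff_distrib sum_subtractf)
  finally show ?thesis
    using block_cdf_diff[OF assms(1-3)] False by simp
qed

lemma block_layout_cut:
  assumes A: "block_layout A w h s" and "0 \<le> \<alpha>" "0 \<le> u"
  shows "block_layout A (cut_width \<alpha> u s w) h (cut_start \<alpha> u s)"
proof -
  have gap: "(s1 - overlap \<alpha> u 0 s1) + (w1 - overlap s1 w1 \<alpha> (\<alpha> + u)) \<le> s2 - overlap \<alpha> u 0 s2"
    if "s1 + w1 \<le> s2" "0 \<le> s1" "0 \<le> w1" for s1 w1 s2
    using that assms(2,3) by (simp add: overlap_def max_def min_def)
  have "0 \<le> cut_width \<alpha> u s w a \<and> 0 \<le> cut_start \<alpha> u s a" if "a \<in> A" for a
    using A that assms(2,3) by (auto simp: block_layout_def cut_width_def cut_start_def overlap_def max_def min_def)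
  then show ?thesis
    using A gap unfolding block_layout_def blocks_disjoint_def cut_width_def cut_start_def
    by (meson order_trans)
qed

definition stacked_start :: "'a set \<Rightarrow> ('a \<Rightarrow> 'a \<Rightarrow> bool) \<Rightarrow> ('a \<Rightarrow> real) \<Rightarrow> 'a \<Rightarrow> real" where
  "stacked_start C lt u c = (\<Sum>c'\<in>{c' \<in> C. lt c' c}. u c')"

definition stacked_cdf :: "'a set \<Rightarrow> ('a \<Rightarrow> 'a \<Rightarrow> bool) \<Rightarrow> ('a \<Rightarrow> real) \<Rightarrow> ('a \<Rightarrow> real) \<Rightarrow> real \<Rightarrow> real" where
  "stacked_cdf C lt u t = block_cdf C u (\<lambda>c. t c / u c) (stacked_start C lt u)"

definition sorted_stack :: "'a set \<Rightarrow> ('a \<Rightarrow> 'a \<Rightarrow> bool) \<Rightarrow> ('a \<Rightarrow> real) \<Rightarrow> ('a \<Rightarrow> real) \<Rightarrow> bool" where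
  "sorted_stack C lt u t \<longleftrightarrow> finite C \<and> irreflp_on C lt \<and> transp_on C lt \<and> totalp_on C lt \<and>
     (\<forall>c\<in>C. 0 < u c \<and> 0 \<le> t c) \<and> (\<forall>a\<in>C. \<forall>b\<in>C. lt a b \<longrightarrow> t b / u b \<le> t a / u a)"

lemma sorted_stackD:
  assumes "sorted_stack C lt u t"
  shows "finite C" "\<And>c. c \<in> C \<Longrightarrow> 0 < u c" "\<And>c. c \<in> C \<Longrightarrow> 0 \<le> t c"
    and "\<And>c. c \<in> C \<Longrightarrow> \<not> lt c c"
    and "\<And>a b c. \<lbrakk>a \<in> C; b \<in> C; c \<in> C; lt a b; lt b c\<rbrakk> \<Longrightarrow> lt a c"
    and "\<And>a b. \<lbrakk>a \<in> C; b \<in> C; a \<noteq> b\<rbrakk> \<Longrightarrow> lt a b \<or> lt b a"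
    and "\<And>a b. \<lbrakk>a \<in> C; b \<in> C; lt a b\<rbrakk> \<Longrightarrow> t b / u b \<le> t a / u a"
  using assms irreflp_onD transp_onD totalp_onD unfolding sorted_stack_def by metis+

lemma sorted_stack_remove: "sorted_stack C lt u t \<Longrightarrow> sorted_stack (C - {c}) lt u t"
  unfolding sorted_stack_def using irreflp_on_subset transp_on_subset totalp_on_subset
  by (metis Diff_subset finite_Diff DiffD1)

lemma sorted_stack_rescale:
  assumes C: "sorted_stack C lt u t" and "0 < a" "0 \<le> b"
  shows "sorted_stack C lt (\<lambda>c. u c / a) (\<lambda>c. b * t c)"
proof -
  have height: "b * t c / (u c / a) = (a * b) * (t c / u c)" if "c \<in> C" for c
    using sorted_stackD(2)[OF C that] assms(2) by (simp add: field_simps)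
  have "b * t y / (u y / a) \<le> b * t x / (u x / a)" if "x \<in> C" "y \<in> C" "lt x y" for x y
    unfolding height[OF that(1)] height[OF that(2)]
    by (rule mult_left_mono) (use sorted_stackD(7)[OF C that] assms(2,3) in simp_all)
  moreover have "\<forall>c\<in>C. 0 < u c / a \<and> 0 \<le> b * t c"
    using sorted_stackD(2,3)[OF C] assms(2,3) by simp
  ultimately show ?thesis
    using C unfolding sorted_stack_def by blast
qed

lemma stacked_start_nonneg: "sorted_stack C lt u t \<Longrightarrow> 0 \<le> stacked_start C lt u c"
  unfolding stacked_start_def sorted_stack_def by (intro sum_nonneg) (auto simp: less_imp_le)

lemma stacked_start_le:
  assumes C: "sorted_stack C lt u t" and c: "c \<in> C" and sub: "{x \<in> C. lt x c} \<subseteq> D" "D \<subseteq> C"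
  shows "stacked_start C lt u c + u c \<le> (\<Sum>x\<in>insert c D. u x)"
proof -
  have "c \<notin> {x \<in> C. lt x c}"
    using sorted_stackD(4)[OF C c] by blast
  then have "stacked_start C lt u c + u c = (\<Sum>x\<in>insert c {x \<in> C. lt x c}. u x)"
    using sorted_stackD(1)[OF C] by (simp add: stacked_start_def)
  also have "\<dots> \<le> (\<Sum>x\<in>insert c D. u x)"
    by (rule sum_mono2)
       (use sorted_stackD(1,2)[OF C] sub c finite_subset[OF sub(2)] in \<open>auto simp: less_imp_le\<close>)
  finally show ?thesis .
qed

lemma stacked_start_less:
  assumes C: "sorted_stack C lt u t" and "c \<in> C" "c' \<in> C" "lt c c'"
  shows "stacked_start C lt u c + u c \<le> stacked_start C lt u c'"
proof -
  have "insert c {x \<in> C. lt x c} \<subseteq> {x \<in> C. lt x c'}"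
    using sorted_stackD(5)[OF C _ assms(2,3) _ assms(4)] assms(2,4) by blast
  then have "stacked_start C lt u c + u c \<le> (\<Sum>x\<in>{x \<in> C. lt x c'}. u x)"
    using stacked_start_le[OF C assms(2), of "{x \<in> C. lt x c'}"] by (simp add: insert_absorb)
  then show ?thesis
    by (simp add: stacked_start_def)
qed

lemma stacked_start_le_sum:
  assumes "sorted_stack C lt u t" "c \<in> C"
  shows "stacked_start C lt u c + u c \<le> sum u C"
  using stacked_start_le[OF assms, of C] assms(2) by (simp add: insert_absorb)

lemma sorted_stack_disjoint:
  assumes "sorted_stack C lt u t"
  shows "blocks_disjoint C (stacked_start C lt u) u"
  unfolding blocks_disjoint_def using sorted_stackD(6)[OF assms] stacked_start_less[OF assms] by blast

lemma stacked_start_first: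
  assumes "\<forall>c\<in>C. \<not> lt c c1"
  shows "stacked_start C lt u c1 = 0"
  unfolding stacked_start_def by (rule sum.neutral) (use assms in blast)

lemma sorted_stack_has_first:
  assumes C: "sorted_stack C lt u t" and "C \<noteq> {}"
  obtains c1 where "c1 \<in> C" "\<forall>c\<in>C. \<not> lt c c1"
proof -
  let ?m = "Min (stacked_start C lt u ` C)"
  have "?m \<in> stacked_start C lt u ` C"
    using sorted_stackD(1)[OF C] assms(2) by simp
  then obtain c1 where c1: "c1 \<in> C" "stacked_start C lt u c1 = ?m"
    by auto
  have "\<not> lt c c1" if c: "c \<in> C" for c
  proof
    assume "lt c c1"
    then have "stacked_start C lt u c + u c \<le> ?m"
      using stacked_start_less[OF C c c1(1)] c1(2) by simp
    moreover have "?m \<le> stacked_start C lt u c"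
      using sorted_stackD(1)[OF C] c by simp
    ultimately show False
      using sorted_stackD(2)[OF C c] by simp
  qed
  then show ?thesis
    using that c1(1) by blast
qed

lemma stacked_cdf_rescale:
  assumes "0 < a"
  shows "stacked_cdf C lt (\<lambda>c. u c / a) (\<lambda>c. b * t c) y = b * stacked_cdf C lt u t (y * a)"
proof -
  have start: "stacked_start C lt (\<lambda>c. u c / a) c = stacked_start C lt u c / a" for c
    unfolding stacked_start_def by (simp add: sum_divide_distrib)
  have "stacked_cdf C lt (\<lambda>c. u c / a) (\<lambda>c. b * t c) y =
        (\<Sum>c\<in>C. b * (t c / u c) * (a * overlap (stacked_start C lt u c / a) (u c / a) 0 y))"
    unfolding stacked_cdf_def block_cdf_def start using assms by (intro sum.cong refl) (simp add: field_simps)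
  also have "\<dots> = b * stacked_cdf C lt u t (y * a)"
    using assms by (simp add: overlap_scale stacked_cdf_def block_cdf_def sum_distrib_left mult.assoc)
  finally show ?thesis .
qed

locale first_of_stack =
  fixes C :: "'a set" and lt :: "'a \<Rightarrow> 'a \<Rightarrow> bool" and u t :: "'a \<Rightarrow> real" and c1 :: 'a
  assumes sorted: "sorted_stack C lt u t" and first_in: "c1 \<in> C" and first: "\<forall>c\<in>C. \<not> lt c c1"
begin

lemma first_before: "c \<in> C \<Longrightarrow> c \<noteq> c1 \<Longrightarrow> lt c1 c"
  using sorted_stackD(6)[OF sorted first_in] first by blast

lemma first_width_le_start: "c \<in> C \<Longrightarrow> c \<noteq> c1 \<Longrightarrow> u c1 \<le> stacked_start C lt u c"
  using stacked_start_less[OF sorted first_in _ first_before] stacked_start_first[of C lt c1 u] first by simp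

lemma first_highest: "c \<in> C \<Longrightarrow> t c / u c \<le> t c1 / u c1"
  using sorted_stackD(7)[OF sorted first_in] first_before by (cases "c = c1") auto

lemma stacked_cdf_window_le:
  assumes y: "0 \<le> y"
  shows "stacked_cdf C lt u t (y + u c1) - stacked_cdf C lt u t y \<le> t c1"
proof -
  note fin = sorted_stackD(1)[OF sorted] and pos = sorted_stackD(2,3)[OF sorted]
  let ?ov = "\<lambda>c. overlap (stacked_start C lt u c) (u c) y (y + u c1)"
  have "stacked_cdf C lt u t (y + u c1) - stacked_cdf C lt u t y = (\<Sum>c\<in>C. (t c / u c) * ?ov c)"
    using block_cdf_diff[OF _ y, of C u "\<lambda>c. t c / u c" "stacked_start C lt u" "u c1"]
      fin pos stacked_start_nonneg[OF sorted] sorted_stack_disjoint[OF sorted] pos(1)[OF first_in]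
    by (simp add: stacked_cdf_def block_layout_def less_imp_le)
  also have "\<dots> \<le> (\<Sum>c\<in>C. (t c1 / u c1) * ?ov c)"
    by (rule sum_mono, rule mult_right_mono) (simp_all add: first_highest overlap_nonneg)
  also have "\<dots> = (t c1 / u c1) * (\<Sum>c\<in>C. ?ov c)"
    by (simp add: sum_distrib_left)
  also have "\<dots> \<le> (t c1 / u c1) * max 0 (y + u c1 - y)"
    using sum_overlap_le[OF fin sorted_stack_disjoint[OF sorted], of y "y + u c1"] pos first_in
    by (intro mult_left_mono) (auto simp: less_imp_le)
  also have "\<dots> = t c1"
    using pos[OF first_in] by simp
  finally show ?thesis .
qed

lemma stacked_cdf_remove_first:
  assumes y: "0 \<le> y"
  shows "stacked_cdf (C - {c1}) lt u t y = stacked_cdf C lt u t (y + u c1) - t c1"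
proof -
  note fin = sorted_stackD(1)[OF sorted] and pos = sorted_stackD(2,3)[OF sorted]
  have start: "stacked_start (C - {c1}) lt u c = stacked_start C lt u c - u c1"
    if "c \<in> C" "c \<noteq> c1" for c
  proof -
    have "{x \<in> C. lt x c} = insert c1 {x \<in> C - {c1}. lt x c}"
      using first_before[OF that] first_in by auto
    then show ?thesis
      using fin by (simp add: stacked_start_def)
  qed
  have "stacked_cdf C lt u t (y + u c1) = (t c1 / u c1) * overlap 0 (u c1) 0 (y + u c1) +
          (\<Sum>c\<in>C - {c1}. (t c / u c) * overlap (stacked_start C lt u c) (u c) 0 (y + u c1))"
    unfolding stacked_cdf_def block_cdf_def
    using fin first_in stacked_start_first[of C lt c1 u] first by (simp add: sum.remove)
  also have "(t c1 / u c1) * overlap 0 (u c1) 0 (y + u c1) = t c1"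
    using pos[OF first_in] y by (simp add: overlap_def)
  also have "(\<Sum>c\<in>C - {c1}. (t c / u c) * overlap (stacked_start C lt u c) (u c) 0 (y + u c1)) =
      stacked_cdf (C - {c1}) lt u t y"
    unfolding stacked_cdf_def block_cdf_def
  proof (rule sum.cong[OF refl])
    fix c assume c: "c \<in> C - {c1}"
    then have "overlap (stacked_start C lt u c) (u c) 0 (y + u c1) =
        overlap (stacked_start (C - {c1}) lt u c) (u c) 0 y"
      using overlap_shift[of "u c1" "stacked_start C lt u c" y "u c"] start[of c]
        first_width_le_start[of c] pos(1)[OF first_in] y by simp
    then show "t c / u c * overlap (stacked_start C lt u c) (u c) 0 (y + u c1) =
        t c / u c * overlap (stacked_start (C - {c1}) lt u c) (u c) 0 y"
      by simp
  qed
  finally show ?thesis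
    by simp
qed

lemma stacked_cdf_first: "stacked_cdf C lt u t (u c1) = t c1"
proof -
  have "overlap (stacked_start (C - {c1}) lt u c) (u c) 0 0 = 0" for c
    using stacked_start_nonneg[OF sorted_stack_remove[OF sorted], of c1 c]
    by (simp add: overlap_def max_def min_def)
  then have "stacked_cdf (C - {c1}) lt u t 0 = 0"
    by (simp add: stacked_cdf_def block_cdf_def)
  then show ?thesis
    using stacked_cdf_remove_first[of 0] by simp
qed

end

section \<open>Transport between block profiles\<close>

text \<open>\<open>G c a\<close> is the width taken from the source block \<open>a\<close> into the target block \<open>c\<close>.\<close>

definition transport_plan ::
    "'a set \<Rightarrow> ('a \<Rightarrow> real) \<Rightarrow> ('a \<Rightarrow> real) \<Rightarrow> 'c set \<Rightarrow> ('c \<Rightarrow> real) \<Rightarrow> ('c \<Rightarrow> real) \<Rightarrow> ('c \<Rightarrow> 'a \<Rightarrow> real) \<Rightarrow> bool" where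
  "transport_plan A w h C u t G \<longleftrightarrow>
     (\<forall>c a. 0 \<le> G c a) \<and> (\<forall>a\<in>A. (\<Sum>c\<in>C. G c a) \<le> w a) \<and>
     (\<forall>c\<in>C. (\<Sum>a\<in>A. G c a) \<le> u c) \<and> (\<forall>c\<in>C. (\<Sum>a\<in>A. G c a * h a) = t c)"

text \<open>The first target block is filled from a window of the source of the same width carrying
  exactly its mass; such a window exists by the intermediate value theorem, and cutting it out
  preserves the domination for the remaining target blocks.\<close>

context first_of_stack
begin

lemma window_with_first_mass:
  assumes A: "block_layout A w h s"
    and dom: "\<And>y. 0 \<le> y \<Longrightarrow> stacked_cdf C lt u t y \<le> block_cdf A w h s y"
  obtains \<alpha> where "0 \<le> \<alpha>" "(\<Sum>a\<in>A. h a * overlap (s a) (w a) \<alpha> (\<alpha> + u c1)) = t c1"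
proof -
  have u1: "0 < u c1" and t1: "0 \<le> t c1"
    using sorted_stackD(2,3)[OF sorted first_in] by auto
  define \<phi> where "\<phi> \<alpha> = block_cdf A w h s (\<alpha> + u c1) - block_cdf A w h s \<alpha>" for \<alpha>
  define R where "R = (\<Sum>a\<in>A. s a + w a)"
  have R: "0 \<le> R" "\<And>a. a \<in> A \<Longrightarrow> s a + w a \<le> R"
    using A unfolding R_def block_layout_def by (auto intro!: sum_nonneg member_le_sum)
  have "\<phi> R = (\<Sum>a\<in>A. h a * overlap (s a) (w a) R (R + u c1))"
    unfolding \<phi>_def by (rule block_cdf_diff[OF A R(1)]) (use u1 in simp)
  also have "\<dots> = 0"
  proof (intro sum.neutral ballI)
    fix a assume "a \<in> A"
    then have "overlap (s a) (w a) R (R + u c1) = 0"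
      using R(2)[of a] u1 by (simp add: overlap_def max_def min_def)
    then show "h a * overlap (s a) (w a) R (R + u c1) = 0"
      by simp
  qed
  finally have "\<phi> R \<le> t c1"
    using t1 by simp
  moreover have "t c1 \<le> \<phi> 0"
    using dom[of "u c1"] u1 stacked_cdf_first by (simp add: \<phi>_def block_cdf_def overlap_def)
  moreover have "continuous_on {0..R} \<phi>"
    unfolding \<phi>_def block_cdf_def overlap_def by (intro continuous_intros)
  ultimately obtain \<alpha> where \<alpha>: "0 \<le> \<alpha>" "\<phi> \<alpha> = t c1"
    using IVT2'[of \<phi> R "t c1" 0] R(1) by auto
  then have "(\<Sum>a\<in>A. h a * overlap (s a) (w a) \<alpha> (\<alpha> + u c1)) = t c1"
    using block_cdf_diff[OF A \<alpha>(1), of "u c1"] u1 by (simp add: \<phi>_def)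
  with \<alpha>(1) show ?thesis
    by (rule that)
qed

lemma cut_window_dominates:
  assumes A: "block_layout A w h s"
    and dom: "\<And>y. 0 \<le> y \<Longrightarrow> stacked_cdf C lt u t y \<le> block_cdf A w h s y"
    and \<alpha>: "0 \<le> \<alpha>" "(\<Sum>a\<in>A. h a * overlap (s a) (w a) \<alpha> (\<alpha> + u c1)) = t c1"
    and y: "0 \<le> y"
  shows "stacked_cdf (C - {c1}) lt u t y \<le> block_cdf A (cut_width \<alpha> (u c1) s w) h (cut_start \<alpha> (u c1) s) y"
proof -
  have u1: "0 < u c1"
    using sorted_stackD(2)[OF sorted first_in] .
  have cut: "block_cdf A (cut_width \<alpha> (u c1) s w) h (cut_start \<alpha> (u c1) s) y =
      (if y \<le> \<alpha> then block_cdf A w h s y else block_cdf A w h s (y + u c1) - t c1)"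
    using block_cdf_cut[OF A \<alpha>(1) _ y, of "u c1"] block_cdf_diff[OF A \<alpha>(1), of "u c1"] u1 \<alpha>(2) by simp
  show ?thesis
  proof (cases "y \<le> \<alpha>")
    case True
    then show ?thesis
      using cut stacked_cdf_remove_first[OF y] stacked_cdf_window_le[OF y] dom[OF y] by simp
  next
    case False
    then show ?thesis
      using cut stacked_cdf_remove_first[OF y] dom[of "y + u c1"] y u1 by simp
  qed
qed

lemma transport_plan_extend:
  assumes A: "block_layout A w h s"
    and \<alpha>: "(\<Sum>a\<in>A. h a * overlap (s a) (w a) \<alpha> (\<alpha> + u c1)) = t c1"
    and G': "transport_plan A (cut_width \<alpha> (u c1) s w) h (C - {c1}) u t G'"
  defines "G \<equiv> \<lambda>c a. if c = c1 then overlap (s a) (w a) \<alpha> (\<alpha> + u c1) else G' c a"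
  shows "transport_plan A w h C u t G"
proof -
  have "(\<Sum>c\<in>C. G c a) = overlap (s a) (w a) \<alpha> (\<alpha> + u c1) + (\<Sum>c\<in>C - {c1}. G' c a)" for a
    using sorted_stackD(1)[OF sorted] first_in by (simp add: sum.remove G_def)
  then have "\<forall>a\<in>A. (\<Sum>c\<in>C. G c a) \<le> w a"
    using G' by (auto simp: transport_plan_def cut_width_def)
  moreover have "(\<Sum>a\<in>A. G c a) \<le> u c \<and> (\<Sum>a\<in>A. G c a * h a) = t c" if "c \<in> C" for c
  proof (cases "c = c1")
    case True
    have "(\<Sum>a\<in>A. overlap (s a) (w a) \<alpha> (\<alpha> + u c1)) \<le> u c1"
      using sum_overlap_le[of A s w \<alpha> "\<alpha> + u c1"] A sorted_stackD(2)[OF sorted first_in]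
      by (simp add: block_layout_def)
    with True \<alpha> show ?thesis
      by (simp add: G_def mult.commute)
  next
    case False
    with G' that show ?thesis
      by (simp add: transport_plan_def G_def)
  qed
  moreover have "\<forall>c a. 0 \<le> G c a"
    using G' by (simp add: transport_plan_def G_def overlap_nonneg)
  ultimately show ?thesis
    by (simp add: transport_plan_def)
qed

end

theorem transport_plan_exists:
  assumes "sorted_stack C lt u t" "block_layout A w h s"
    and "\<And>y. 0 \<le> y \<Longrightarrow> stacked_cdf C lt u t y \<le> block_cdf A w h s y"
  shows "\<exists>G. transport_plan A w h C u t G"
  using assms
proof (induction "card C" arbitrary: C w s)
  case 0
  then have "C = {}"
    by (simp add: sorted_stack_def)
  then have "transport_plan A w h C u t (\<lambda>_ _. 0)"
    using "0.prems"(2) by (simp add: transport_plan_def block_layout_def)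
  then show ?case
    by blast
next
  case (Suc n)
  note C = Suc.prems(1) and A = Suc.prems(2)
  have "C \<noteq> {}"
    using Suc.hyps(2) by auto
  then obtain c1 where c1: "c1 \<in> C" "\<forall>c\<in>C. \<not> lt c c1"
    by (rule sorted_stack_has_first[OF C])
  interpret first_of_stack C lt u t c1
    using C c1 by unfold_locales
  obtain \<alpha> where \<alpha>: "0 \<le> \<alpha>" "(\<Sum>a\<in>A. h a * overlap (s a) (w a) \<alpha> (\<alpha> + u c1)) = t c1"
    using window_with_first_mass[OF A Suc.prems(3)] by blast
  have "n = card (C - {c1})"
    using Suc.hyps(2) sorted_stackD(1)[OF C] c1(1) by simp
  moreover have "block_layout A (cut_width \<alpha> (u c1) s w) h (cut_start \<alpha> (u c1) s)"
    using block_layout_cut[OF A \<alpha>(1)] sorted_stackD(2)[OF C c1(1)] by simp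
  ultimately obtain G' where "transport_plan A (cut_width \<alpha> (u c1) s w) h (C - {c1}) u t G'"
    using Suc.hyps(1) sorted_stack_remove[OF C] cut_window_dominates[OF A Suc.prems(3) \<alpha>] by blast
  then show ?case
    using transport_plan_extend[OF A \<alpha>(2)] by blast
qed

section \<open>The Gibbs rescaling as a block profile\<close>

lemma bweight_pos: "e \<noteq> \<infinity> \<Longrightarrow> 0 < bweight k T e"
  by (simp add: bweight_def)

lemma bweight_nonneg: "0 \<le> bweight k T e"
  by (simp add: bweight_def)

lemma block_height_eq: "E i \<noteq> \<infinity> \<Longrightarrow> block_height k T E lam i = lam i / bweight k T (E i)"
  by (simp add: bweight_def block_height_def exp_minus divide_inverse)

lemma block_height_mult_bweight: "E i \<noteq> \<infinity> \<Longrightarrow> block_height k T E lam i * bweight k T (E i) = lam i"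
  using bweight_pos[of "E i" k T] by (simp add: block_height_eq)

lemma sum_finite_levels_state: "is_state d E lam \<Longrightarrow> (\<Sum>i\<in>finite_levels d E. lam i) = 1"
  unfolding is_state_def finite_levels_def
  by (subst sum.mono_neutral_left[of "{..<d}"]) auto

definition block_order :: "real \<Rightarrow> real \<Rightarrow> (nat \<Rightarrow> ereal) \<Rightarrow> (nat \<Rightarrow> real) \<Rightarrow> nat \<Rightarrow> nat \<Rightarrow> bool" where
  "block_order k T E lam j i \<longleftrightarrow> block_height k T E lam j > block_height k T E lam i \<or>
      (block_height k T E lam j = block_height k T E lam i \<and> j < i)"

lemma block_start_eq_stacked_start:
  "block_start k T d E lam = stacked_start (finite_levels d E) (block_order k T E lam) (\<lambda>i. bweight k T (E i))"
  unfolding block_start_def stacked_start_def block_order_def by simp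

lemma sorted_stack_gibbs:
  assumes "is_state d E lam"
  shows "sorted_stack (finite_levels d E) (block_order k T E lam) (\<lambda>i. bweight k T (E i)) lam"
  unfolding sorted_stack_def
proof (intro conjI)
  show "irreflp_on (finite_levels d E) (block_order k T E lam)"
    by (rule irreflp_onI) (simp add: block_order_def)
  show "transp_on (finite_levels d E) (block_order k T E lam)"
    by (rule transp_onI) (auto simp: block_order_def)
  show "totalp_on (finite_levels d E) (block_order k T E lam)"
    by (rule totalp_onI) (auto simp: block_order_def)
  show "\<forall>c\<in>finite_levels d E. 0 < bweight k T (E c) \<and> 0 \<le> lam c"
    using assms bweight_pos by (auto simp: finite_levels_def is_state_def)
  show "\<forall>a\<in>finite_levels d E. \<forall>b\<in>finite_levels d E. block_order k T E lam a b \<longrightarrow>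
      lam b / bweight k T (E b) \<le> lam a / bweight k T (E a)"
    by (auto simp: block_order_def finite_levels_def block_height_eq)
qed (simp add: finite_levels_def)

lemma block_layout_gibbs:
  assumes "is_state d E lam"
  shows "block_layout (finite_levels d E) (\<lambda>i. bweight k T (E i)) (block_height k T E lam) (block_start k T d E lam)"
proof -
  note sorted = sorted_stack_gibbs[OF assms, of k T]
  have "\<forall>i\<in>finite_levels d E. 0 \<le> block_height k T E lam i"
    using assms by (auto simp: finite_levels_def is_state_def block_height_def)
  then show ?thesis
    unfolding block_layout_def block_start_eq_stacked_start
    using sorted_stack_disjoint[OF sorted] stacked_start_nonneg[OF sorted] bweight_nonneg
    by (simp add: finite_levels_def)
qed

definition gibbs_cdf :: "real \<Rightarrow> real \<Rightarrow> nat \<Rightarrow> (nat \<Rightarrow> ereal) \<Rightarrow> (nat \<Rightarrow> real) \<Rightarrow> real \<Rightarrow> real" where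
  "gibbs_cdf k T d E lam =
     block_cdf (finite_levels d E) (\<lambda>i. bweight k T (E i)) (block_height k T E lam) (block_start k T d E lam)"

lemma stacked_cdf_gibbs:
  "stacked_cdf (finite_levels d E) (block_order k T E lam) (\<lambda>i. bweight k T (E i)) lam = gibbs_cdf k T d E lam"
  unfolding stacked_cdf_def gibbs_cdf_def block_cdf_def block_start_eq_stacked_start
  by (intro ext sum.cong refl) (simp add: block_height_eq finite_levels_def)

lemma integral_block:
  assumes "0 \<le> s" "0 \<le> w" "0 \<le> l"
  shows "((\<lambda>x. if s \<le> x \<and> x < s + w then h else 0) has_integral h * overlap s w 0 l) {0..l}"
proof -
  have restrict: "(\<lambda>x. if s \<le> x \<and> x < s + w then h else 0) = (\<lambda>x. if x \<in> {s..<s + w} then h else 0)"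
    by auto
  have "((\<lambda>x. h) has_integral h * overlap s w 0 l) ({s..<s + w} \<inter> {0..l})"
  proof (cases "s \<le> l")
    case True
    have const: "((\<lambda>x. h) has_integral h * overlap s w 0 l) {s..min (s + w) l}"
      using True assms has_integral_const_real[of h s "min (s + w) l"]
      by (simp add: overlap_def max_def min_def mult.commute)
    have n1: "negligible {x \<in> {s..<s + w} \<inter> {0..l} - {s..min (s + w) l}. h \<noteq> 0}"
      by (rule negligible_subset[of "{}"]) auto
    have n2: "negligible {x \<in> {s..min (s + w) l} - {s..<s + w} \<inter> {0..l}. h \<noteq> 0}"
      by (rule negligible_subset[of "{s + w}"]) (use assms in auto)
    show ?thesis
      using has_integral_spike_set_eq[where f="\<lambda>x. h", OF n1 n2] const by simp
  next
    case False
    then have "{s..<s + w} \<inter> {0..l} = {}"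
      by auto
    then show ?thesis
      using False assms by (simp add: overlap_def)
  qed
  then show ?thesis
    unfolding restrict has_integral_restrict_Int by simp
qed

theorem integral_gibbs_rescaling:
  assumes "is_state d E lam" "0 \<le> l"
  shows "integral {0..l} (gibbs_rescaling k T d E lam) = gibbs_cdf k T d E lam l"
proof -
  note layout = block_layout_gibbs[OF assms(1), of k T]
  have "(gibbs_rescaling k T d E lam has_integral gibbs_cdf k T d E lam l) {0..l}"
    unfolding gibbs_rescaling_def[abs_def] gibbs_cdf_def block_cdf_def
    by (rule has_integral_sum) (use layout assms(2) in \<open>auto intro!: integral_block simp: block_layout_def\<close>)
  then show ?thesis
    by (rule integral_unique)
qed

definition partition_function :: "real \<Rightarrow> real \<Rightarrow> nat \<Rightarrow> (nat \<Rightarrow> ereal) \<Rightarrow> real" where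
  "partition_function k T d E = (\<Sum>i\<in>finite_levels d E. bweight k T (E i))"

definition total_height :: "real \<Rightarrow> real \<Rightarrow> nat \<Rightarrow> (nat \<Rightarrow> ereal) \<Rightarrow> (nat \<Rightarrow> real) \<Rightarrow> real" where
  "total_height k T d E lam = (\<Sum>i\<in>finite_levels d E. block_height k T E lam i)"

locale gibbs_state =
  fixes k T :: real and d :: nat and E :: "nat \<Rightarrow> ereal" and lam :: "nat \<Rightarrow> real"
  assumes state: "is_state d E lam"
begin

lemma height_nonneg: "i \<in> finite_levels d E \<Longrightarrow> 0 \<le> block_height k T E lam i"
  using state by (auto simp: finite_levels_def is_state_def block_height_def)

lemma sum_height_bweight: "(\<Sum>i\<in>finite_levels d E. block_height k T E lam i * bweight k T (E i)) = 1"
  using sum_finite_levels_state[OF state] by (simp add: block_height_mult_bweight finite_levels_def)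

lemma finite_level_real: "i \<in> finite_levels d E \<Longrightarrow> \<exists>r. E i = ereal r"
  using state by (cases "E i") (auto simp: finite_levels_def is_state_def)

lemma lam_eq_0: "i < d \<Longrightarrow> i \<notin> finite_levels d E \<Longrightarrow> lam i = 0"
  using state by (auto simp: finite_levels_def is_state_def)

lemma gibbs_cdf_nonneg: "0 \<le> gibbs_cdf k T d E lam y"
  unfolding gibbs_cdf_def block_cdf_def using height_nonneg
  by (auto intro!: sum_nonneg mult_nonneg_nonneg simp: overlap_nonneg)

lemma gibbs_cdf_le_one: "gibbs_cdf k T d E lam y \<le> 1"
proof -
  have "gibbs_cdf k T d E lam y \<le> (\<Sum>i\<in>finite_levels d E. block_height k T E lam i * bweight k T (E i))"
    unfolding gibbs_cdf_def block_cdf_def using height_nonneg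
    by (intro sum_mono mult_left_mono overlap_le_width) (auto simp: bweight_nonneg)
  then show ?thesis
    by (simp add: sum_height_bweight)
qed

lemma gibbs_cdf_eq_one:
  assumes "partition_function k T d E \<le> y"
  shows "gibbs_cdf k T d E lam y = 1"
proof -
  note sorted = sorted_stack_gibbs[OF state, of k T]
  have "overlap (block_start k T d E lam i) (bweight k T (E i)) 0 y = bweight k T (E i)"
    if "i \<in> finite_levels d E" for i
  proof -
    have "0 \<le> block_start k T d E lam i"
      "block_start k T d E lam i + bweight k T (E i) \<le> partition_function k T d E"
      using stacked_start_le_sum[OF sorted that] stacked_start_nonneg[OF sorted]
      by (simp_all add: block_start_eq_stacked_start partition_function_def)
    then show ?thesis
      using assms bweight_nonneg[of k T "E i"] by (auto simp: overlap_def max_def min_def)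
  qed
  then show ?thesis
    unfolding gibbs_cdf_def block_cdf_def by (simp add: sum_height_bweight)
qed

lemma gibbs_cdf_le_linear: "0 \<le> y \<Longrightarrow> gibbs_cdf k T d E lam y \<le> total_height k T d E lam * y"
  unfolding gibbs_cdf_def block_cdf_def total_height_def sum_distrib_right
  using height_nonneg block_layout_gibbs[OF state, of k T]
  by (intro sum_mono mult_left_mono) (auto simp: block_layout_def overlap_def)

lemma first_block_positive:
  obtains i0 where "i0 \<in> finite_levels d E" "block_start k T d E lam i0 = 0" "0 < block_height k T E lam i0"
proof -
  note sorted = sorted_stack_gibbs[OF state, of k T]
  have "\<exists>j\<in>finite_levels d E. 0 < lam j"
    using sum_finite_levels_state[OF state] sum_nonpos[of "finite_levels d E" lam] by force
  then obtain j where j: "j \<in> finite_levels d E" "0 < lam j"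
    by blast
  then obtain i0 where i0: "i0 \<in> finite_levels d E" "\<forall>c\<in>finite_levels d E. \<not> block_order k T E lam c i0"
    using sorted_stack_has_first[OF sorted] by blast
  interpret first_of_stack "finite_levels d E" "block_order k T E lam" "\<lambda>i. bweight k T (E i)" lam i0
    using sorted i0 by unfold_locales
  have "0 < lam j / bweight k T (E j)"
    using j bweight_pos[of "E j" k T] by (simp add: finite_levels_def)
  also have "\<dots> \<le> lam i0 / bweight k T (E i0)"
    by (rule first_highest[OF j(1)])
  finally show ?thesis
    using that i0 stacked_start_first[of _ "block_order k T E lam" i0]
    by (simp add: block_start_eq_stacked_start block_height_eq finite_levels_def)
qed

lemma gibbs_cdf_ge_first_block:
  obtains h0 w0 where "0 < h0" "0 < w0" "w0 \<le> partition_function k T d E"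
    "\<And>y. 0 \<le> y \<Longrightarrow> h0 * min w0 y \<le> gibbs_cdf k T d E lam y"
proof -
  obtain i0 where i0: "i0 \<in> finite_levels d E" "block_start k T d E lam i0 = 0" "0 < block_height k T E lam i0"
    by (rule first_block_positive)
  let ?h = "block_height k T E lam i0" and ?w = "bweight k T (E i0)"
  have w: "0 < ?w"
    using i0(1) bweight_pos by (auto simp: finite_levels_def)
  have "?w \<le> partition_function k T d E"
    unfolding partition_function_def
    by (rule member_le_sum) (use i0(1) bweight_nonneg in \<open>auto simp: finite_levels_def\<close>)
  moreover have "?h * min ?w y \<le> gibbs_cdf k T d E lam y" if "0 \<le> y" for y
  proof -
    have "?h * min ?w y = ?h * overlap (block_start k T d E lam i0) ?w 0 y"
      using i0(2) w that by (simp add: overlap_def)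
    also have "\<dots> \<le> gibbs_cdf k T d E lam y"
      unfolding gibbs_cdf_def block_cdf_def
      by (rule member_le_sum) (use i0(1) height_nonneg in \<open>auto simp: finite_levels_def overlap_nonneg\<close>)
    finally show ?thesis .
  qed
  ultimately show ?thesis
    using that i0(3) w by blast
qed

lemma partition_function_pos: "0 < partition_function k T d E"
  by (metis gibbs_cdf_ge_first_block less_le_trans)

lemma total_height_pos: "0 < total_height k T d E lam"
proof -
  obtain i0 where "i0 \<in> finite_levels d E" "0 < block_height k T E lam i0"
    using first_block_positive by blast
  moreover have "block_height k T E lam i0 \<le> total_height k T d E lam"
    unfolding total_height_def
    by (rule member_le_sum) (use calculation height_nonneg in \<open>auto simp: finite_levels_def\<close>)
  ultimately show ?thesis
    by simp
qed

end

section \<open>Relative mixedness of Gibbs rescalings\<close>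

lemma greatest_scaling_factor:
  fixes F G :: "real \<Rightarrow> real"
  defines "Q \<equiv> \<lambda>m. 0 < m \<and> (\<forall>l\<ge>0. F (l * m) \<le> G l)"
  assumes F: "continuous_on UNIV F" and witness: "Q m0" and bounded: "\<And>m. Q m \<Longrightarrow> m \<le> B"
  shows "Q (GREATEST m. Q m)"
proof -
  define S where "S = {m0..} \<inter> (\<Inter>l\<in>{0..}. {m. F (l * m) \<le> G l})"
  have "continuous_on UNIV (\<lambda>m. F (l * m))" for l
    by (rule continuous_on_compose2[OF F]) (auto intro: continuous_intros)
  then have "closed S"
    unfolding S_def by (intro closed_Int closed_atLeast closed_INT ballI closed_Collect_le continuous_on_const)
  moreover have "{m. Q m \<and> m0 \<le> m} \<subseteq> S"
    unfolding S_def Q_def by auto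
  moreover have "{m. Q m \<and> m0 \<le> m} \<noteq> {}"
    using witness by auto
  moreover have bdd: "bdd_above {m. Q m \<and> m0 \<le> m}"
    using bounded unfolding bdd_above_def by blast
  ultimately have "Sup {m. Q m \<and> m0 \<le> m} \<in> S"
    by (rule closed_subset_contains_Sup)
  then have Q_Sup: "Q (Sup {m. Q m \<and> m0 \<le> m})"
    using witness unfolding S_def Q_def by auto
  have "m \<le> Sup {m. Q m \<and> m0 \<le> m}" if "Q m" for m
  proof (cases "m0 \<le> m")
    case True
    then show ?thesis
      using that bdd by (intro cSup_upper) auto
  next
    case False
    then show ?thesis
      using \<open>Sup {m. Q m \<and> m0 \<le> m} \<in> S\<close> unfolding S_def by auto
  qed
  then show ?thesis
    using Greatest_equality[of Q, OF Q_Sup] Q_Sup by simp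
qed

locale two_gibbs_states = \<rho>: gibbs_state k T d E\<rho> lam\<rho> + \<sigma>: gibbs_state k T d E\<sigma> lam\<sigma>
  for k T :: real and d :: nat and E\<rho> E\<sigma> :: "nat \<Rightarrow> ereal" and lam\<rho> lam\<sigma> :: "nat \<Rightarrow> real"
begin

text \<open>The first block of \<open>\<rho>\<close> rises linearly from \<open>0\<close>, and \<open>G\<^sup>T(\<sigma>)\<close> is bounded by
  \<open>total_height\<close>, so squeezing \<open>\<sigma>\<close> enough puts its cumulative mass below that of \<open>\<rho>\<close>.\<close>

lemma gibbs_cdf_dominated_after_squeeze:
  obtains m0 where "0 < m0" "\<And>l. 0 \<le> l \<Longrightarrow> gibbs_cdf k T d E\<sigma> lam\<sigma> (l * m0) \<le> gibbs_cdf k T d E\<rho> lam\<rho> l"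
proof -
  obtain h0 w0 where hw: "0 < h0" "0 < w0" "w0 \<le> partition_function k T d E\<rho>"
    "\<And>y. 0 \<le> y \<Longrightarrow> h0 * min w0 y \<le> gibbs_cdf k T d E\<rho> lam\<rho> y"
    using \<rho>.gibbs_cdf_ge_first_block by blast
  define Z where "Z = partition_function k T d E\<rho>"
  define H where "H = total_height k T d E\<sigma> lam\<sigma>"
  have Z: "0 < Z" and H: "0 < H"
    using \<rho>.partition_function_pos \<sigma>.total_height_pos by (simp_all add: Z_def H_def)
  define m0 where "m0 = h0 * w0 / (Z * H)"
  have m0: "0 < m0"
    using hw(1,2) H Z by (simp add: m0_def)
  have "gibbs_cdf k T d E\<sigma> lam\<sigma> (l * m0) \<le> gibbs_cdf k T d E\<rho> lam\<rho> l" if l: "0 \<le> l" for l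
  proof (cases "Z \<le> l")
    case True
    then show ?thesis
      using \<rho>.gibbs_cdf_eq_one \<sigma>.gibbs_cdf_le_one by (simp add: Z_def)
  next
    case False
    have "w0 * l / Z \<le> min w0 l"
      using False l hw(2,3) Z mult_left_mono[OF hw(3) l]
      by (simp add: divide_le_eq mult_left_mono Z_def mult.commute)
    then have "H * (l * m0) \<le> h0 * min w0 l"
      using H Z hw(1) mult_left_mono[of "w0 * l / Z" "min w0 l" h0] by (simp add: m0_def field_simps)
    moreover have "gibbs_cdf k T d E\<sigma> lam\<sigma> (l * m0) \<le> H * (l * m0)"
      unfolding H_def by (rule \<sigma>.gibbs_cdf_le_linear) (use l m0 in simp)
    ultimately show ?thesis
      using hw(4)[OF l] by linarith
  qed
  with m0 show ?thesis
    by (rule that)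
qed

lemma scaling_factor_bound:
  assumes "0 < m" and "\<And>l. 0 \<le> l \<Longrightarrow> c * gibbs_cdf k T d E\<sigma> lam\<sigma> (l * m) \<le> gibbs_cdf k T d E\<rho> lam\<rho> l"
  shows "c * m \<le> total_height k T d E\<rho> lam\<rho> * partition_function k T d E\<sigma>"
proof -
  let ?l = "partition_function k T d E\<sigma> / m"
  have l: "0 \<le> ?l"
    using \<sigma>.partition_function_pos assms(1) by simp
  have "c = c * gibbs_cdf k T d E\<sigma> lam\<sigma> (?l * m)"
    using \<sigma>.gibbs_cdf_eq_one assms(1) by simp
  also have "\<dots> \<le> total_height k T d E\<rho> lam\<rho> * ?l"
    using assms(2)[OF l] \<rho>.gibbs_cdf_le_linear[OF l] by linarith
  finally show ?thesis
    using assms(1) by (simp add: field_simps)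
qed

theorem rel_mixedness_gibbs:
  assumes "0 \<le> \<epsilon>" "\<epsilon> < 1"
  defines "M \<equiv> rel_mixedness (\<lambda>x. gibbs_rescaling k T d E\<rho> lam\<rho> x / (1 - \<epsilon>)) (gibbs_rescaling k T d E\<sigma> lam\<sigma>)"
  shows "0 < M" "\<And>l. 0 \<le> l \<Longrightarrow> (1 - \<epsilon>) * gibbs_cdf k T d E\<sigma> lam\<sigma> (l * M) \<le> gibbs_cdf k T d E\<rho> lam\<rho> l"
proof -
  define F where "F = gibbs_cdf k T d E\<sigma> lam\<sigma>"
  define G where "G l = gibbs_cdf k T d E\<rho> lam\<rho> l / (1 - \<epsilon>)" for l
  define Q where "Q m \<longleftrightarrow> 0 < m \<and> (\<forall>l\<ge>0. F (l * m) \<le> G l)" for m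
  have e: "0 < 1 - \<epsilon>"
    using assms(2) by simp
  have le_G: "c \<le> G l \<longleftrightarrow> (1 - \<epsilon>) * c \<le> gibbs_cdf k T d E\<rho> lam\<rho> l" for c l
    using e by (simp add: G_def le_divide_eq mult.commute)
  obtain m0 where m0: "0 < m0" "\<And>l. 0 \<le> l \<Longrightarrow> F (l * m0) \<le> gibbs_cdf k T d E\<rho> lam\<rho> l"
    using gibbs_cdf_dominated_after_squeeze unfolding F_def by blast
  have "integral {0..l * m} (gibbs_rescaling k T d E\<sigma> lam\<sigma>) = F (l * m)" if "0 \<le> l" "0 < m" for l m
    using integral_gibbs_rescaling[OF \<sigma>.state] that by (simp add: F_def)
  then have M_eq: "M = (GREATEST m. Q m)"
    unfolding M_def rel_mixedness_def
    by (intro arg_cong[where f=Greatest] ext) (auto simp: Q_def G_def integral_gibbs_rescaling[OF \<rho>.state])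
  have "Q (GREATEST m. Q m)"
    unfolding Q_def
  proof (rule greatest_scaling_factor)
    show "continuous_on UNIV F"
      unfolding F_def gibbs_cdf_def block_cdf_def overlap_def by (intro continuous_intros)
    have "(1 - \<epsilon>) * F (l * m0) \<le> gibbs_cdf k T d E\<rho> lam\<rho> l" if "0 \<le> l" for l
      using m0(2)[OF that] mult_nonneg_nonneg[OF assms(1) \<sigma>.gibbs_cdf_nonneg[of "l * m0"]]
      by (simp add: F_def left_diff_distrib)
    then show "0 < m0 \<and> (\<forall>l\<ge>0. F (l * m0) \<le> G l)"
      using m0(1) le_G by blast
    show "m \<le> total_height k T d E\<rho> lam\<rho> * partition_function k T d E\<sigma> / (1 - \<epsilon>)"
      if "0 < m \<and> (\<forall>l\<ge>0. F (l * m) \<le> G l)" for m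
      using scaling_factor_bound[of m "1 - \<epsilon>"] that le_G e by (simp add: F_def le_divide_eq mult.commute)
  qed
  then have "Q M"
    unfolding M_eq .
  then show "0 < M" "\<And>l. 0 \<le> l \<Longrightarrow> (1 - \<epsilon>) * gibbs_cdf k T d E\<sigma> lam\<sigma> (l * M) \<le> gibbs_cdf k T d E\<rho> lam\<rho> l"
    using le_G by (auto simp: Q_def F_def)
qed

end

definition path_event_prob :: "nat \<Rightarrow> step list \<Rightarrow> nat \<Rightarrow> (nat list \<Rightarrow> bool) \<Rightarrow> real" where
  "path_event_prob d ss j Q = (\<Sum>ls\<in>paths d (length ss). if Q ls then path_prob ss j ls else 0)"

lemma paths_Suc: "paths d (Suc m) = (\<lambda>(i, ls). i # ls) ` ({..<d} \<times> paths d m)"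
proof (intro equalityI subsetI)
  fix x assume "x \<in> paths d (Suc m)"
  then obtain i ls where "x = i # ls" "i < d" "ls \<in> paths d m"
    by (cases x) (auto simp: paths_def)
  then show "x \<in> (\<lambda>(i, ls). i # ls) ` ({..<d} \<times> paths d m)"
    by force
qed (auto simp: paths_def)

lemma sum_paths_Suc: "(\<Sum>ls\<in>paths d (Suc m). f ls) = (\<Sum>i<d. \<Sum>ls\<in>paths d m. f (i # ls))"
proof -
  have "inj_on (\<lambda>(i, ls). i # ls) ({..<d} \<times> paths d m)"
    by (auto simp: inj_on_def)
  then have "(\<Sum>ls\<in>paths d (Suc m). f ls) = (\<Sum>x\<in>{..<d} \<times> paths d m. f (fst x # snd x))"
    unfolding paths_Suc by (subst sum.reindex) (auto intro!: sum.cong simp: case_prod_beta)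
  then show ?thesis
    by (simp add: sum.cartesian_product case_prod_beta)
qed

lemma prob_event_eq_sum: "prob_event d lam ss P = (\<Sum>j<d. lam j * path_event_prob d ss j (P j))"
  unfolding prob_event_def path_event_prob_def by (auto simp: sum_distrib_left intro!: sum.cong)

lemma path_event_prob_Nil: "path_event_prob d [] j Q = (if Q [] then 1 else 0)"
proof -
  have "paths d 0 = {[]}"
    by (auto simp: paths_def)
  then show ?thesis
    by (simp add: path_event_prob_def)
qed

lemma path_event_prob_Cons:
  "path_event_prob d (s # ss) j Q = (\<Sum>i<d. step_factor s j i * path_event_prob d ss i (\<lambda>ls. Q (i # ls)))"
  unfolding path_event_prob_def by (simp add: sum_paths_Suc sum_distrib_left if_distrib cong: if_cong)

lemma path_event_prob_deterministic:
  assumes "\<And>i. step_factor s j i = (if i = f j then 1 else 0)" "f j < d"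
  shows "path_event_prob d (s # ss) j Q = path_event_prob d ss (f j) (\<lambda>ls. Q (f j # ls))"
proof -
  have "(\<Sum>i<d. (if i = f j then 1 else 0) * path_event_prob d ss i (\<lambda>ls. Q (i # ls))) =
      (\<Sum>i<d. if i = f j then path_event_prob d ss i (\<lambda>ls. Q (i # ls)) else 0)"
    by (intro sum.cong) auto
  then show ?thesis
    unfolding path_event_prob_Cons assms(1) using assms(2) by simp
qed

lemma path_event_prob_Change:
  "j < d \<Longrightarrow> path_event_prob d (Change S F # ss) j Q = path_event_prob d ss j (\<lambda>ls. Q (j # ls))"
  using path_event_prob_deterministic[where s="Change S F" and f=id] by simp

definition permutation_matrix :: "(nat \<Rightarrow> nat) \<Rightarrow> nat \<Rightarrow> nat \<Rightarrow> real" where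
  "permutation_matrix f i j = (if i = f j then 1 else 0)"

lemma path_event_prob_permutation:
  "f j < d \<Longrightarrow> path_event_prob d (Therm (permutation_matrix f) # ss) j Q = path_event_prob d ss (f j) (\<lambda>ls. Q (f j # ls))"
  using path_event_prob_deterministic[where s="Therm (permutation_matrix f)" and f=f]
  by (simp add: permutation_matrix_def)

section \<open>Gibbs-preserving thermalisations\<close>

lemma valid_permutation_step:
  assumes "\<And>i. i < d \<Longrightarrow> f i < d" "\<And>i. i < d \<Longrightarrow> f (f i) = i" "\<And>i. i < d \<Longrightarrow> E (f i) = E i"
  shows "valid_step k T d E (Therm (permutation_matrix f))"
proof -
  have "(\<Sum>j<d. permutation_matrix f i j * gibbs_vec k T d E j) = gibbs_vec k T d E i" if "i < d" for i
  proof -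
    have "(\<Sum>j<d. permutation_matrix f i j * gibbs_vec k T d E j) = (\<Sum>j<d. if j = f i then gibbs_vec k T d E j else 0)"
      by (intro sum.cong refl) (use assms that in \<open>auto simp: permutation_matrix_def\<close>)
    also have "\<dots> = gibbs_vec k T d E i"
      using assms that by (simp add: gibbs_vec_def)
    finally show ?thesis .
  qed
  moreover have "(\<Sum>i<d. permutation_matrix f i j) = 1" if "j < d" for j
    using assms(1)[OF that] by (simp add: permutation_matrix_def sum.delta)
  ultimately show ?thesis
    by (simp add: permutation_matrix_def)
qed

text \<open>Population is exchanged between the levels of \<open>A\<close> and those of \<open>D\<close>: the flow between
  \<open>a \<in> A\<close> and \<open>i \<in> D\<close> is \<open>G i a\<close> in either direction, measured in units of Boltzmann weight.
  This is detailed balance, so the Gibbs state is preserved.\<close>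

definition exchange_matrix :: "nat set \<Rightarrow> nat set \<Rightarrow> (nat \<Rightarrow> real) \<Rightarrow> (nat \<Rightarrow> nat \<Rightarrow> real) \<Rightarrow> nat \<Rightarrow> nat \<Rightarrow> real" where
  "exchange_matrix A D w G i j =
    (if j \<in> A then (if i \<in> D then G i j / w j else if i = j then 1 - (\<Sum>i'\<in>D. G i' j) / w j else 0)
     else if j \<in> D then (if i \<in> A then G j i / w j else if i = j then 1 - (\<Sum>a\<in>A. G j a) / w j else 0)
     else if i = j then 1 else 0)"

lemma sum_on_set_plus_point:
  assumes "D \<subseteq> {..<d::nat}" "j < d" "j \<notin> D"
  shows "(\<Sum>i<d. if i \<in> D then f i else if i = j then c else 0) = sum f D + (c::real)"
proof -
  have "(\<Sum>i<d. if i \<in> D then f i else if i = j then c else 0) =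
        (\<Sum>i\<in>{..<d} \<inter> D. f i) + (\<Sum>i\<in>{..<d} - D. if i = j then c else 0)"
    by (simp add: sum.If_cases Diff_eq)
  also have "{..<d} \<inter> D = D"
    using assms(1) by auto
  finally show ?thesis
    using assms(2,3) by (simp add: sum.delta)
qed

context
  fixes d :: nat and A D :: "nat set" and w :: "nat \<Rightarrow> real" and G :: "nat \<Rightarrow> nat \<Rightarrow> real"
  assumes A: "A \<subseteq> {..<d}" and D: "D \<subseteq> {..<d}" and disjoint: "A \<inter> D = {}"
    and w_pos: "\<And>i. i \<in> A \<union> D \<Longrightarrow> 0 < w i" and G_nonneg: "\<And>i a. 0 \<le> G i a"
    and out_A: "\<And>a. a \<in> A \<Longrightarrow> (\<Sum>i\<in>D. G i a) \<le> w a"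
    and out_D: "\<And>i. i \<in> D \<Longrightarrow> (\<Sum>a\<in>A. G i a) \<le> w i"
begin

lemma exchange_matrix_nonneg: "0 \<le> exchange_matrix A D w G i j"
proof -
  have "0 \<le> G i j / w j \<and> 0 \<le> G j i / w j" if "j \<in> A \<union> D"
    using G_nonneg w_pos[OF that] by simp
  moreover have "(\<Sum>i'\<in>D. G i' j) / w j \<le> 1" if "j \<in> A"
    using out_A[OF that] w_pos[of j] that by (simp add: divide_le_eq)
  moreover have "(\<Sum>a\<in>A. G j a) / w j \<le> 1" if "j \<in> D"
    using out_D[OF that] w_pos[of j] that by (simp add: divide_le_eq)
  ultimately show ?thesis
    by (auto simp: exchange_matrix_def)
qed

lemma exchange_matrix_column_sum:
  assumes "j < d"
  shows "(\<Sum>i<d. exchange_matrix A D w G i j) = 1"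
proof -
  consider "j \<in> A" | "j \<in> D" | "j \<notin> A" "j \<notin> D"
    by blast
  then show ?thesis
  proof cases
    case 1
    then have "j \<notin> D"
      using disjoint by blast
    with 1 show ?thesis
      unfolding exchange_matrix_def using sum_on_set_plus_point[OF D assms] by (simp add: sum_divide_distrib)
  next
    case 2
    then have "j \<notin> A"
      using disjoint by blast
    with 2 show ?thesis
      unfolding exchange_matrix_def using sum_on_set_plus_point[OF A assms] by (simp add: sum_divide_distrib)
  next
    case 3
    then show ?thesis
      using assms by (simp add: exchange_matrix_def sum.delta)
  qed
qed

lemma exchange_matrix_weighted_row_sum:
  assumes "i < d"
  shows "(\<Sum>j<d. exchange_matrix A D w G i j * w j) = w i"
proof -
  consider "i \<in> D" | "i \<in> A" | "i \<notin> A" "i \<notin> D"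
    by blast
  then show ?thesis
  proof cases
    case 1
    have "(\<Sum>j<d. exchange_matrix A D w G i j * w j) =
        (\<Sum>j<d. if j \<in> A then G i j else if j = i then w i - (\<Sum>a\<in>A. G i a) else 0)"
    proof (rule sum.cong[OF refl])
      fix j
      show "exchange_matrix A D w G i j * w j = (if j \<in> A then G i j else if j = i then w i - (\<Sum>a\<in>A. G i a) else 0)"
        using 1 disjoint w_pos[of i] w_pos[of j] by (auto simp: exchange_matrix_def field_simps)
    qed
    also have "\<dots> = w i"
      using 1 disjoint sum_on_set_plus_point[OF A assms, of "G i" "w i - sum (G i) A"] by auto
    finally show ?thesis .
  next
    case 2
    have "(\<Sum>j<d. exchange_matrix A D w G i j * w j) =
        (\<Sum>j<d. if j \<in> D then G j i else if j = i then w i - (\<Sum>i'\<in>D. G i' i) else 0)"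
    proof (rule sum.cong[OF refl])
      fix j
      show "exchange_matrix A D w G i j * w j = (if j \<in> D then G j i else if j = i then w i - (\<Sum>i'\<in>D. G i' i) else 0)"
        using 2 disjoint w_pos[of i] w_pos[of j] by (auto simp: exchange_matrix_def field_simps)
    qed
    also have "\<dots> = w i"
      using 2 disjoint sum_on_set_plus_point[OF D assms, of "\<lambda>j. G j i" "w i - (\<Sum>i'\<in>D. G i' i)"] by auto
    finally show ?thesis .
  next
    case 3
    then have "(\<Sum>j<d. exchange_matrix A D w G i j * w j) = (\<Sum>j<d. if j = i then w i else 0)"
      by (intro sum.cong refl) (auto simp: exchange_matrix_def)
    then show ?thesis
      using assms by simp
  qed
qed

lemma valid_exchange_step:
  assumes "w = (\<lambda>i. bweight k T (E i))"
  shows "valid_step k T d E (Therm (exchange_matrix A D w G))"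
proof -
  have "(\<Sum>j<d. exchange_matrix A D w G i j * gibbs_vec k T d E j) = gibbs_vec k T d E i" if "i < d" for i
    using exchange_matrix_weighted_row_sum[OF that] assms
    by (simp add: gibbs_vec_def sum_divide_distrib[symmetric] mult.assoc[symmetric] times_divide_eq_right)
  then show ?thesis
    using exchange_matrix_nonneg exchange_matrix_column_sum by simp
qed

end

section \<open>A protocol extracting the work bound exactly\<close>

text \<open>The levels in \<open>recv\<close> are empty in \<open>\<rho>\<close>; each is paired by \<open>relabel\<close> with a level of \<open>\<sigma>\<close>
  and raised to its \<open>\<sigma>\<close>-energy plus \<open>W\<close>, so its Boltzmann weight is that of the \<open>\<sigma>\<close>-level divided
  by \<open>M\<close>. A thermalisation realising the transport plan \<open>G\<close> moves population from the levels of
  \<open>\<rho>\<close> into \<open>recv\<close>; the fraction \<open>\<epsilon>\<close> left behind is lost when those levels are raised to \<open>\<infinity>\<close>.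
  The \<open>\<sigma>\<close>-levels that are occupied in \<open>\<rho>\<close> are now empty; they are lowered and swapped with their
  spare partners in \<open>X\<close>, and finally all \<open>\<sigma>\<close>-levels are lowered by \<open>W\<close>, which is extracted.\<close>

locale protocol = two_gibbs_states k T d E\<rho> E\<sigma> lam\<rho> lam\<sigma>
  for k T :: real and d :: nat and E\<rho> E\<sigma> :: "nat \<Rightarrow> ereal" and lam\<rho> lam\<sigma> :: "nat \<Rightarrow> real" +
  fixes \<epsilon> M :: real and X :: "nat set" and \<kappa> :: "nat \<Rightarrow> nat" and G :: "nat \<Rightarrow> nat \<Rightarrow> real"
  assumes k_pos: "0 < k" and T_pos: "0 < T" and M_pos: "0 < M"
    and spare: "X \<subseteq> {i. i < d \<and> E\<rho> i = \<infinity>} - finite_levels d E\<sigma>"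
    and spare_bij: "bij_betw \<kappa> X (finite_levels d E\<sigma> \<inter> finite_levels d E\<rho>)"
    and plan: "transport_plan (finite_levels d E\<rho>) (\<lambda>a. bweight k T (E\<rho> a)) (block_height k T E\<rho> lam\<rho>)
      (finite_levels d E\<sigma>) (\<lambda>c. bweight k T (E\<sigma> c) / M) (\<lambda>c. (1 - \<epsilon>) * lam\<sigma> c) G"
begin

abbreviation "src \<equiv> finite_levels d E\<rho>"
abbreviation "tgt \<equiv> finite_levels d E\<sigma>"

definition "recv = (tgt - src) \<union> X"
definition "relabel i = (if i \<in> X then \<kappa> i else i)"
definition "swap i = (if i \<in> X then \<kappa> i else if i \<in> tgt \<inter> src then inv_into X \<kappa> i else i)"
definition "W = k * T * ln M"

definition "E\<^sub>1 i = (if i \<in> recv then E\<sigma> (relabel i) + ereal W else E\<rho> i)"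
definition "E\<^sub>3 i = (if i \<in> src then \<infinity> else E\<^sub>1 i)"
definition "E\<^sub>4 i = (if i \<in> tgt \<inter> src then E\<sigma> i + ereal W else E\<^sub>3 i)"

definition "B = exchange_matrix src recv (\<lambda>i. bweight k T (E\<^sub>1 i)) (\<lambda>i. G (relabel i))"

definition "steps =
  [Change recv (\<lambda>i. E\<sigma> (relabel i) + ereal W), Therm B, Change src (\<lambda>_. \<infinity>),
   Change (tgt \<inter> src) (\<lambda>i. E\<sigma> i + ereal W), Therm (permutation_matrix swap),
   Change (X \<union> tgt) (\<lambda>i. if i \<in> tgt then E\<sigma> i else \<infinity>)]"

lemma src_subset: "src \<subseteq> {..<d}" and tgt_subset: "tgt \<subseteq> {..<d}" and X_subset: "X \<subseteq> {..<d}"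
  using spare by (auto simp: finite_levels_def)

lemma recv_subset: "recv \<subseteq> {..<d}"
  using tgt_subset X_subset by (auto simp: recv_def)

lemma X_disjoint: "X \<inter> src = {}" "X \<inter> tgt = {}"
  using spare by (auto simp: finite_levels_def)

lemma src_recv_disjoint: "src \<inter> recv = {}"
  using X_disjoint by (auto simp: recv_def)

lemma spare_partner: "i \<in> X \<Longrightarrow> \<kappa> i \<in> tgt \<inter> src"
  and spare_partner_inv: "c \<in> tgt \<inter> src \<Longrightarrow> inv_into X \<kappa> c \<in> X"
  and spare_partner_inv_eq: "c \<in> tgt \<inter> src \<Longrightarrow> \<kappa> (inv_into X \<kappa> c) = c"
  and spare_inv_partner_eq: "i \<in> X \<Longrightarrow> inv_into X \<kappa> (\<kappa> i) = i"
  using spare_bij by (auto simp: bij_betw_def inv_into_into f_inv_into_f)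

lemma bij_betw_relabel: "bij_betw relabel recv tgt"
proof -
  have "bij_betw relabel (tgt - src) (tgt - src)"
    by (rule bij_betw_cong[THEN iffD2, of _ _ id]) (use X_disjoint in \<open>auto simp: relabel_def\<close>)
  moreover have "bij_betw relabel X (tgt \<inter> src)"
    by (rule bij_betw_cong[THEN iffD1, OF _ spare_bij]) (simp add: relabel_def)
  ultimately have "bij_betw relabel ((tgt - src) \<union> X) ((tgt - src) \<union> (tgt \<inter> src))"
    using X_disjoint by (intro bij_betw_combine) auto
  then show ?thesis
    by (simp add: recv_def Un_Diff_Int)
qed

lemma relabel_in_tgt: "i \<in> recv \<Longrightarrow> relabel i \<in> tgt"
  using bij_betw_relabel by (auto simp: bij_betw_def)

lemma swap_less: "i < d \<Longrightarrow> swap i < d"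
  using spare_partner spare_partner_inv X_subset tgt_subset by (auto simp: swap_def)

lemma swap_swap: "i < d \<Longrightarrow> swap (swap i) = i"
  using spare_partner spare_partner_inv spare_partner_inv_eq spare_inv_partner_eq X_disjoint
  by (auto simp: swap_def)

lemma swap_recv: "i \<in> recv \<Longrightarrow> swap i = relabel i"
  using X_disjoint by (auto simp: swap_def relabel_def recv_def)

lemma swap_energy: "i < d \<Longrightarrow> E\<^sub>4 (swap i) = E\<^sub>4 i"
proof -
  assume "i < d"
  consider "i \<in> X" | "i \<in> tgt \<inter> src" | "i \<notin> X" "i \<notin> tgt \<inter> src"
    by blast
  then show ?thesis
  proof cases
    case 1
    then show ?thesis
      using spare_partner[OF 1] X_disjoint
      by (auto simp: swap_def E\<^sub>4_def E\<^sub>3_def E\<^sub>1_def relabel_def recv_def)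
  next
    case 2
    then show ?thesis
      using spare_partner_inv[OF 2] spare_partner_inv_eq[OF 2] X_disjoint
      by (auto simp: swap_def E\<^sub>4_def E\<^sub>3_def E\<^sub>1_def relabel_def recv_def)
  next
    case 3
    then show ?thesis
      by (auto simp: swap_def)
  qed
qed

lemma bweight_shift: "bweight k T (ereal (r + W)) = bweight k T (ereal r) / M"
proof -
  have "- (r + k * T * ln M) / (k * T) = - r / (k * T) - ln M"
    using k_pos T_pos by (simp add: field_simps)
  then show ?thesis
    using M_pos by (simp add: bweight_def W_def exp_diff)
qed

lemma steps_energies:
  "apply_step E\<rho> (Change recv (\<lambda>i. E\<sigma> (relabel i) + ereal W)) = E\<^sub>1"
  "apply_step E\<^sub>1 (Change src (\<lambda>_. \<infinity>)) = E\<^sub>3"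
  "apply_step E\<^sub>3 (Change (tgt \<inter> src) (\<lambda>i. E\<sigma> i + ereal W)) = E\<^sub>4"
  by (auto simp: E\<^sub>1_def E\<^sub>3_def E\<^sub>4_def)

lemma valid_steps: "valid_strategy k T d E\<rho> steps"
proof -
  have "valid_step k T d E\<^sub>1 (Therm B)"
    unfolding B_def
  proof (rule valid_exchange_step[OF src_subset recv_subset src_recv_disjoint])
    show "0 < bweight k T (E\<^sub>1 i)" if "i \<in> src \<union> recv" for i
      using that src_recv_disjoint relabel_in_tgt \<sigma>.finite_level_real \<rho>.finite_level_real
      by (fastforce simp: E\<^sub>1_def bweight_def)
    show "(\<Sum>i\<in>recv. G (relabel i) a) \<le> bweight k T (E\<^sub>1 a)" if "a \<in> src" for a
      using plan that src_recv_disjoint sum.reindex_bij_betw[OF bij_betw_relabel, of "\<lambda>c. G c a"]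
      by (auto simp: transport_plan_def E\<^sub>1_def)
    show "(\<Sum>a\<in>src. G (relabel i) a) \<le> bweight k T (E\<^sub>1 i)" if i: "i \<in> recv" for i
    proof -
      obtain r where r: "E\<sigma> (relabel i) = ereal r"
        using \<sigma>.finite_level_real[OF relabel_in_tgt[OF i]] by blast
      have "(\<Sum>a\<in>src. G (relabel i) a) \<le> bweight k T (E\<sigma> (relabel i)) / M"
        using plan relabel_in_tgt[OF i] by (simp add: transport_plan_def)
      then show ?thesis
        using r i by (simp add: E\<^sub>1_def bweight_shift)
    qed
  qed (use plan in \<open>simp_all add: transport_plan_def\<close>)
  moreover have "valid_step k T d E\<^sub>4 (Therm (permutation_matrix swap))"
    by (rule valid_permutation_step[where f=swap and E="E\<^sub>4", OF swap_less swap_swap swap_energy])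
  moreover have "\<forall>i\<in>recv. E\<sigma> (relabel i) + ereal W \<noteq> - \<infinity>" "\<forall>i\<in>tgt. E\<sigma> i \<noteq> - \<infinity>"
    using relabel_in_tgt \<sigma>.finite_level_real by fastforce+
  ultimately show ?thesis
    unfolding steps_def valid_strategy.simps apply_step.simps(1) steps_energies
    using recv_subset src_subset tgt_subset X_subset by (simp add: le_infI1)
qed

lemma final_energies_steps: "i < d \<Longrightarrow> final_energies E\<rho> steps i = E\<sigma> i"
  by (auto simp: final_energies_def steps_def E\<^sub>1_def recv_def finite_levels_def)

lemma path_event_prob_steps:
  assumes "j < d"
  shows "path_event_prob d steps j Q = (\<Sum>i<d. B i j * (if Q [j, i, i, i, swap i, swap i] then 1 else 0))"
proof -
  have tail: "path_event_prob d (drop 2 steps) i Q' = (if Q' [i, i, swap i, swap i] then 1 else 0)"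
    if "i < d" for i Q'
    unfolding steps_def numeral_2_eq_2 drop_Suc_Cons drop_0
    by (simp only: path_event_prob_Change[OF that] path_event_prob_permutation[where f=swap, OF swap_less[OF that]]
        path_event_prob_Change[OF swap_less[OF that]] path_event_prob_Nil)
  have "path_event_prob d steps j Q = (\<Sum>i<d. B i j * path_event_prob d (drop 2 steps) i (\<lambda>ls. Q (j # i # ls)))"
    unfolding steps_def numeral_2_eq_2 drop_Suc_Cons drop_0
    by (simp only: path_event_prob_Change[OF assms] path_event_prob_Cons[where s="Therm B"] step_factor.simps)
  also have "\<dots> = (\<Sum>i<d. B i j * (if Q [j, i, i, i, swap i, swap i] then 1 else 0))"
    using tail by (intro sum.cong refl) simp
  finally show ?thesis .
qed

lemma path_works_steps: "path_works E\<rho> steps j [j, i, i, i, i', i'] =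
   [step_work E\<rho> (Change recv (\<lambda>i. E\<sigma> (relabel i) + ereal W)) j, 0,
    step_work E\<^sub>1 (Change src (\<lambda>_. \<infinity>)) i, step_work E\<^sub>3 (Change (tgt \<inter> src) (\<lambda>i. E\<sigma> i + ereal W)) i, 0,
    step_work E\<^sub>4 (Change (X \<union> tgt) (\<lambda>i. if i \<in> tgt then E\<sigma> i else \<infinity>)) i']"
  unfolding steps_def path_works.simps apply_step.simps(1) step_work.simps(1) steps_energies ..

lemma total_work_success:
  assumes "j \<in> src" "i \<in> recv"
  shows "total_work E\<rho> steps j [j, i, i, i, swap i, swap i] = ereal W"
proof -
  have "relabel i \<in> tgt" "swap i = relabel i"
    using relabel_in_tgt swap_recv assms(2) by auto
  moreover obtain r where "E\<sigma> (relabel i) = ereal r"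
    using \<sigma>.finite_level_real calculation(1) by blast
  moreover have "E\<^sub>4 (relabel i) = E\<sigma> (relabel i) + ereal W"
    using assms(2) spare_partner X_disjoint
    by (cases "i \<in> X") (auto simp: E\<^sub>4_def E\<^sub>3_def E\<^sub>1_def relabel_def recv_def)
  ultimately have "path_works E\<rho> steps j [j, i, i, i, swap i, swap i] = [0, 0, 0, 0, 0, ereal W]"
    unfolding path_works_steps using assms src_recv_disjoint by auto
  then show ?thesis
    by (simp add: total_work_def)
qed

lemma total_work_failure:
  assumes "i \<in> src"
  shows "total_work E\<rho> steps j [j, i, i, i, i', i'] = - \<infinity>"
proof -
  obtain r where "E\<rho> i = ereal r"
    using \<rho>.finite_level_real assms by blast
  then have "step_work E\<^sub>1 (Change src (\<lambda>_. \<infinity>)) i = - \<infinity>"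
    using assms src_recv_disjoint by (auto simp: E\<^sub>1_def)
  then show ?thesis
    unfolding total_work_def path_works_steps by simp
qed

lemma success_indicator:
  assumes "j < d" "b \<le> W"
  shows "lam\<rho> j * (B i j * (if ereal b \<le> total_work E\<rho> steps j [j, i, i, i, swap i, swap i] \<and> R (swap i) then 1 else 0))
       = lam\<rho> j * (B i j * (if i \<in> recv \<and> R (relabel i) then 1 else 0))"
proof (cases "j \<in> src")
  case False
  then show ?thesis
    using \<rho>.lam_eq_0 assms(1) by simp
next
  case True
  consider "i \<in> recv" | "i \<in> src" | "i \<notin> recv" "i \<noteq> j"
    using True by blast
  then show ?thesis
  proof cases
    case 1
    then show ?thesis
      using total_work_success[OF True 1] swap_recv assms(2) by simp
  next
    case 2
    then show ?thesis
      using total_work_failure src_recv_disjoint by auto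
  next
    case 3
    then have "B i j = 0"
      using True by (simp add: B_def exchange_matrix_def)
    then show ?thesis
      by simp
  qed
qed

lemma transported_mass:
  "(\<Sum>j<d. lam\<rho> j * (\<Sum>i<d. B i j * (if i \<in> recv \<and> P i then 1 else 0)))
   = (\<Sum>i\<in>recv. if P i then (1 - \<epsilon>) * lam\<sigma> (relabel i) else 0)"
proof -
  have "(\<Sum>j<d. lam\<rho> j * (\<Sum>i<d. B i j * (if i \<in> recv \<and> P i then 1 else 0)))
      = (\<Sum>j\<in>src. lam\<rho> j * (\<Sum>i<d. B i j * (if i \<in> recv \<and> P i then 1 else 0)))"
    by (rule sum.mono_neutral_right) (use src_subset \<rho>.lam_eq_0 in auto)
  also have "\<dots> = (\<Sum>j\<in>src. \<Sum>i\<in>recv. if P i then G (relabel i) j * block_height k T E\<rho> lam\<rho> j else 0)"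
  proof (rule sum.cong[OF refl])
    fix j assume j: "j \<in> src"
    have "(\<Sum>i<d. B i j * (if i \<in> recv \<and> P i then 1 else 0)) = (\<Sum>i\<in>recv. B i j * (if P i then 1 else 0))"
      using recv_subset by (intro sum.mono_neutral_cong_right) auto
    also have "\<dots> = (\<Sum>i\<in>recv. if P i then G (relabel i) j / bweight k T (E\<rho> j) else 0)"
      using j src_recv_disjoint by (intro sum.cong refl) (auto simp: B_def exchange_matrix_def E\<^sub>1_def)
    finally have "lam\<rho> j * (\<Sum>i<d. B i j * (if i \<in> recv \<and> P i then 1 else 0)) =
        (\<Sum>i\<in>recv. lam\<rho> j * (if P i then G (relabel i) j / bweight k T (E\<rho> j) else 0))"
      by (simp add: sum_distrib_left)
    also have "\<dots> = (\<Sum>i\<in>recv. if P i then G (relabel i) j * block_height k T E\<rho> lam\<rho> j else 0)"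
      using j by (intro sum.cong refl) (simp add: block_height_eq finite_levels_def)
    finally show "lam\<rho> j * (\<Sum>i<d. B i j * (if i \<in> recv \<and> P i then 1 else 0))
        = (\<Sum>i\<in>recv. if P i then G (relabel i) j * block_height k T E\<rho> lam\<rho> j else 0)" .
  qed
  also have "\<dots> = (\<Sum>i\<in>recv. if P i then (\<Sum>j\<in>src. G (relabel i) j * block_height k T E\<rho> lam\<rho> j) else 0)"
    by (subst sum.swap) (auto intro: sum.cong)
  also have "\<dots> = (\<Sum>i\<in>recv. if P i then (1 - \<epsilon>) * lam\<sigma> (relabel i) else 0)"
    using plan relabel_in_tgt by (intro sum.cong refl) (simp add: transport_plan_def)
  finally show ?thesis .
qed

lemma prob_success:
  assumes "b \<le> W"
  shows "prob_event d lam\<rho> steps (\<lambda>j ls. ereal b \<le> total_work E\<rho> steps j ls \<and> R (final_level j ls))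
    = (\<Sum>i\<in>recv. if R (relabel i) then (1 - \<epsilon>) * lam\<sigma> (relabel i) else 0)"
proof -
  have "prob_event d lam\<rho> steps (\<lambda>j ls. ereal b \<le> total_work E\<rho> steps j ls \<and> R (final_level j ls))
     = (\<Sum>j<d. lam\<rho> j * (\<Sum>i<d. B i j *
          (if ereal b \<le> total_work E\<rho> steps j [j, i, i, i, swap i, swap i] \<and> R (swap i) then 1 else 0)))"
    unfolding prob_event_eq_sum by (intro sum.cong refl) (simp add: path_event_prob_steps final_level_def)
  also have "\<dots> = (\<Sum>j<d. lam\<rho> j * (\<Sum>i<d. B i j * (if i \<in> recv \<and> R (relabel i) then 1 else 0)))"
    unfolding sum_distrib_left using success_indicator assms by (intro sum.cong refl) auto
  also have "\<dots> = (\<Sum>i\<in>recv. if R (relabel i) then (1 - \<epsilon>) * lam\<sigma> (relabel i) else 0)"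
    by (rule transported_mass)
  finally show ?thesis .
qed

lemma prob_success_total:
  "b \<le> W \<Longrightarrow> prob_event d lam\<rho> steps (\<lambda>j ls. ereal b \<le> total_work E\<rho> steps j ls) = 1 - \<epsilon>"
  using prob_success[of b "\<lambda>_. True"] sum.reindex_bij_betw[OF bij_betw_relabel, of lam\<sigma>]
    sum_finite_levels_state[OF \<sigma>.state]
  by (simp add: sum_distrib_left[symmetric])

lemma prob_success_final_level:
  assumes "b \<le> W" "c < d"
  shows "prob_event d lam\<rho> steps (\<lambda>j ls. ereal b \<le> total_work E\<rho> steps j ls \<and> final_level j ls = c)
    = (1 - \<epsilon>) * lam\<sigma> c"
proof -
  have "prob_event d lam\<rho> steps (\<lambda>j ls. ereal b \<le> total_work E\<rho> steps j ls \<and> final_level j ls = c)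
     = (\<Sum>c'\<in>tgt. if c' = c then (1 - \<epsilon>) * lam\<sigma> c' else 0)"
    using prob_success[OF assms(1), of "\<lambda>c'. c' = c"]
      sum.reindex_bij_betw[OF bij_betw_relabel, of "\<lambda>c'. if c' = c then (1 - \<epsilon>) * lam\<sigma> c' else 0"]
    by simp
  also have "\<dots> = (1 - \<epsilon>) * lam\<sigma> c"
    using \<sigma>.lam_eq_0[OF assms(2)] by (simp add: finite_levels_def)
  finally show ?thesis .
qed

end

lemma obtain_bij_betw_subset:
  assumes "finite A" "finite B" "card A \<le> card B"
  obtains X f where "X \<subseteq> B" "bij_betw f X A"
proof -
  obtain X where "X \<subseteq> B" "card X = card A"
    using obtain_subset_with_card_n[OF assms(3)] by blast
  moreover then obtain f where "bij_betw f X A"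
    using finite_same_card_bij[of X A] assms(1,2) finite_subset by metis
  ultimately show ?thesis
    using that by blast
qed

lemma card_occupied_le_spare:
  fixes d :: nat and E\<rho> E\<sigma> :: "nat \<Rightarrow> ereal"
  defines "I \<equiv> {i. i < d \<and> E\<rho> i = \<infinity>}"
  assumes "card (finite_levels d E\<sigma>) \<le> card I"
  shows "card (finite_levels d E\<sigma> \<inter> finite_levels d E\<rho>) \<le> card (I - finite_levels d E\<sigma>)"
proof -
  have fin: "finite (finite_levels d E\<sigma>)" "finite I"
    by (simp_all add: finite_levels_def I_def)
  have "finite_levels d E\<sigma> \<inter> finite_levels d E\<rho> = finite_levels d E\<sigma> - (finite_levels d E\<sigma> \<inter> I)"
    by (auto simp: finite_levels_def I_def)
  then have "card (finite_levels d E\<sigma> \<inter> finite_levels d E\<rho>) = card (finite_levels d E\<sigma>) - card (finite_levels d E\<sigma> \<inter> I)"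
    using fin by (simp add: card_Diff_subset)
  also have "\<dots> \<le> card I - card (finite_levels d E\<sigma> \<inter> I)"
    using assms(2) by simp
  also have "\<dots> = card (I - finite_levels d E\<sigma>)"
    using fin by (simp add: card_Diff_subset_Int Int_commute)
  finally show ?thesis .
qed

theorem work_bound_achievable_exactly:
  assumes "0 < k" "0 < T" "is_state d E\<rho> lam\<rho>" "is_state d E\<sigma> lam\<sigma>" "0 \<le> \<epsilon>" "\<epsilon> < 1"
    and "card (finite_levels d E\<sigma>) \<le> card {i. i < d \<and> E\<rho> i = \<infinity>}"
  shows "\<exists>ss. valid_strategy k T d E\<rho> ss \<and> (\<forall>i<d. final_energies E\<rho> ss i = E\<sigma> i) \<and>
    (\<forall>b \<le> work_bound k T d \<epsilon> E\<rho> lam\<rho> E\<sigma> lam\<sigma>.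
       prob_event d lam\<rho> ss (\<lambda>j ls. ereal b \<le> total_work E\<rho> ss j ls) = 1 - \<epsilon> \<and>
       (\<forall>i<d. prob_event d lam\<rho> ss (\<lambda>j ls. ereal b \<le> total_work E\<rho> ss j ls \<and> final_level j ls = i)
          = (1 - \<epsilon>) * lam\<sigma> i))"
proof -
  interpret two_gibbs_states k T d E\<rho> E\<sigma> lam\<rho> lam\<sigma>
    using assms(3,4) by unfold_locales
  define M where "M = rel_mixedness (\<lambda>x. gibbs_rescaling k T d E\<rho> lam\<rho> x / (1 - \<epsilon>)) (gibbs_rescaling k T d E\<sigma> lam\<sigma>)"
  have M: "0 < M" "\<And>l. 0 \<le> l \<Longrightarrow> (1 - \<epsilon>) * gibbs_cdf k T d E\<sigma> lam\<sigma> (l * M) \<le> gibbs_cdf k T d E\<rho> lam\<rho> l"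
    using rel_mixedness_gibbs[OF assms(5,6)] by (simp_all add: M_def)
  have target: "sorted_stack (finite_levels d E\<sigma>) (block_order k T E\<sigma> lam\<sigma>)
      (\<lambda>c. bweight k T (E\<sigma> c) / M) (\<lambda>c. (1 - \<epsilon>) * lam\<sigma> c)"
    using sorted_stack_rescale[OF sorted_stack_gibbs[OF assms(4)] M(1)] assms(6) by simp
  have "stacked_cdf (finite_levels d E\<sigma>) (block_order k T E\<sigma> lam\<sigma>) (\<lambda>c. bweight k T (E\<sigma> c) / M)
      (\<lambda>c. (1 - \<epsilon>) * lam\<sigma> c) l \<le> gibbs_cdf k T d E\<rho> lam\<rho> l" if "0 \<le> l" for l
    using M(2)[OF that] by (simp add: stacked_cdf_rescale[OF M(1)] stacked_cdf_gibbs)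
  then have "\<exists>G. transport_plan (finite_levels d E\<rho>) (\<lambda>a. bweight k T (E\<rho> a)) (block_height k T E\<rho> lam\<rho>)
      (finite_levels d E\<sigma>) (\<lambda>c. bweight k T (E\<sigma> c) / M) (\<lambda>c. (1 - \<epsilon>) * lam\<sigma> c) G"
    unfolding gibbs_cdf_def by (rule transport_plan_exists[OF target block_layout_gibbs[OF assms(3)]])
  then obtain G where G: "transport_plan (finite_levels d E\<rho>) (\<lambda>a. bweight k T (E\<rho> a)) (block_height k T E\<rho> lam\<rho>)
      (finite_levels d E\<sigma>) (\<lambda>c. bweight k T (E\<sigma> c) / M) (\<lambda>c. (1 - \<epsilon>) * lam\<sigma> c) G"
    by (rule exE)
  have "finite (finite_levels d E\<sigma> \<inter> finite_levels d E\<rho>)" "finite ({i. i < d \<and> E\<rho> i = \<infinity>} - finite_levels d E\<sigma>)"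
    by (simp_all add: finite_levels_def)
  then obtain X \<kappa> where "X \<subseteq> {i. i < d \<and> E\<rho> i = \<infinity>} - finite_levels d E\<sigma>"
    "bij_betw \<kappa> X (finite_levels d E\<sigma> \<inter> finite_levels d E\<rho>)"
    using obtain_bij_betw_subset card_occupied_le_spare[OF assms(7)] by blast
  then interpret protocol k T d E\<rho> E\<sigma> lam\<rho> lam\<sigma> \<epsilon> M X \<kappa> G
    using assms(1,2) M(1) G by unfold_locales
  have "W = work_bound k T d \<epsilon> E\<rho> lam\<rho> E\<sigma> lam\<sigma>"
    unfolding W_def by (simp add: work_bound_def M_def)
  then show ?thesis
    using valid_steps final_energies_steps prob_success_total prob_success_final_level
    by (intro exI[of _ steps]) auto
qed

lemma card_finite_levels_le_card_empty_levels:
  assumes "n + 1 \<le> card {i. i < 2 * n + 1 \<and> lam\<rho> i = 0 \<and> E\<rho> i = \<infinity>}"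
    and "n + 1 \<le> card {i. i < 2 * n + 1 \<and> lam\<sigma> i = 0 \<and> E\<sigma> i = \<infinity>}"
  shows "card (finite_levels (2 * n + 1) E\<sigma>) \<le> card {i. i < 2 * n + 1 \<and> E\<rho> i = \<infinity>}"
proof -
  let ?Z = "{i. i < 2 * n + 1 \<and> lam\<sigma> i = 0 \<and> E\<sigma> i = \<infinity>}"
  have "card (finite_levels (2 * n + 1) E\<sigma>) \<le> card ({..<2 * n + 1} - ?Z)"
    by (rule card_mono) (auto simp: finite_levels_def)
  also have "\<dots> = 2 * n + 1 - card ?Z"
    by (subst card_Diff_subset) auto
  also have "\<dots> \<le> card {i. i < 2 * n + 1 \<and> lam\<rho> i = 0 \<and> E\<rho> i = \<infinity>}"
    using assms by linarith
  also have "\<dots> \<le> card {i. i < 2 * n + 1 \<and> E\<rho> i = \<infinity>}"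
    by (rule card_mono) auto
  finally show ?thesis .
qed

theorem work_bound_achievable:
  assumes "0 < k" "0 < T" "is_state d E\<rho> lam\<rho>" "is_state d E\<sigma> lam\<sigma>" "0 \<le> \<epsilon>" "\<epsilon> < 1"
    and "card (finite_levels d E\<sigma>) \<le> card {i. i < d \<and> E\<rho> i = \<infinity>}"
  shows "\<forall>\<delta>>0. \<exists>ss. valid_strategy k T d E\<rho> ss \<and> (\<forall>i<d. final_energies E\<rho> ss i = E\<sigma> i) \<and>
     (let good = (\<lambda>j ls. total_work E\<rho> ss j ls \<ge> ereal (work_bound k T d \<epsilon> E\<rho> lam\<rho> E\<sigma> lam\<sigma> - \<delta>));
          P = prob_event d lam\<rho> ss good;
          q = (\<lambda>i. prob_event d lam\<rho> ss (\<lambda>j ls. good j ls \<and> final_level j ls = i) / P)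
      in P \<ge> 1 - \<epsilon> - \<delta> \<and> P > 0 \<and> (1/2) * (\<Sum>i<d. \<bar>q i - lam\<sigma> i\<bar>) \<le> \<delta>)"
proof -
  obtain ss where "valid_strategy k T d E\<rho> ss" "\<forall>i<d. final_energies E\<rho> ss i = E\<sigma> i"
    and P: "\<And>b. b \<le> work_bound k T d \<epsilon> E\<rho> lam\<rho> E\<sigma> lam\<sigma> \<Longrightarrow>
       prob_event d lam\<rho> ss (\<lambda>j ls. ereal b \<le> total_work E\<rho> ss j ls) = 1 - \<epsilon>"
    and q: "\<And>b i. b \<le> work_bound k T d \<epsilon> E\<rho> lam\<rho> E\<sigma> lam\<sigma> \<Longrightarrow> i < d \<Longrightarrow>
       prob_event d lam\<rho> ss (\<lambda>j ls. ereal b \<le> total_work E\<rho> ss j ls \<and> final_level j ls = i) = (1 - \<epsilon>) * lam\<sigma> i"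
    using work_bound_achievable_exactly[OF assms] by blast
  then show ?thesis
    unfolding Let_def using assms(6) by (intro allI impI exI[of _ ss]) (simp add: P q)
qed

theorem theorem1:
  fixes k T \<epsilon> :: real and n :: nat
    and E\<rho> E\<sigma> :: "nat \<Rightarrow> ereal" and lam\<rho> lam\<sigma> :: "nat \<Rightarrow> real"
  assumes "k > 0" and "T > 0"
    and "is_state (2 * n + 1) E\<rho> lam\<rho>" and "is_state (2 * n + 1) E\<sigma> lam\<sigma>"
    and "card {i. i < 2 * n + 1 \<and> lam\<rho> i = 0 \<and> E\<rho> i = \<infinity>} \<ge> n + 1"
    and "card {i. i < 2 * n + 1 \<and> lam\<sigma> i = 0 \<and> E\<sigma> i = \<infinity>} \<ge> n + 1"
    and "0 \<le> \<epsilon>" and "\<epsilon> < 1"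
  shows "\<forall>\<delta>>0. \<exists>ss.
     valid_strategy k T (2 * n + 1) E\<rho> ss \<and>
     (\<forall>i < 2 * n + 1. final_energies E\<rho> ss i = E\<sigma> i) \<and>
     (let d = 2 * n + 1;
          good = (\<lambda>j ls. total_work E\<rho> ss j ls \<ge>
                     ereal (work_bound k T d \<epsilon> E\<rho> lam\<rho> E\<sigma> lam\<sigma> - \<delta>));
          P = prob_event d lam\<rho> ss good;
          q = (\<lambda>i. prob_event d lam\<rho> ss (\<lambda>j ls. good j ls \<and> final_level j ls = i) / P)
      in P \<ge> 1 - \<epsilon> - \<delta> \<and> P > 0 \<and>
         (1/2) * (\<Sum>i<d. \<bar>q i - lam\<sigma> i\<bar>) \<le> \<delta>)"
  using work_bound_achievable[OF assms(1-4,7,8) card_finite_levels_le_card_empty_levels[OF assms(5,6)]]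
  unfolding Let_def .

end
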